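(* Let $N\geq3$, $2<q<2^*=\frac{2N}{N-2}$, $\kappa>0$, and let $V:\mathbb{R}^N\to\mathbb{R}$ be continuous with $V_0\leq V(x)\leq V_\infty$ for all $x$, for constants $0<V_0\leq V_\infty$. Let $g$, $G$ be as in the context and define $J_\kappa:H^1(\mathbb{R}^N)\to\mathbb{R}$ by $$J_\kappa(v)=\frac12\int_{\mathbb{R}^N}|\nabla v|^2dx+\frac12\int_{\mathbb{R}^N}V(x)|G^{-1}(v)|^2dx-\frac1q\int_{\mathbb{R}^N}|G^{-1}(v)|^qdx.$$ If $v\in C^2(\mathbb{R}^N)\cap H^1(\mathbb{R}^N)$ is a critical point of $J_\kappa$, then $u=G^{-1}(v)\in C^2(\mathbb{R}^N)\cap H^1(\mathbb{R}^N)$ and $u$ is a classical solution of $$-\mathrm{div}(g^2(u)\nabla u)+g(u)g'(u)|\nabla u|^2+V(x)u=|u|^{q-2}u\quad\text{in }\mathbb{R}^N.$$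
   Context: $g:\mathbb{R}\to\mathbb{R}$ is defined by $g(t)=\sqrt{1-\kappa t^2}$ if $0\leq t<\sqrt{1/(3\kappa)}$, $g(t)=\frac{1}{3\sqrt{2\kappa}\,t}+\sqrt{\frac16}$ if $t\geq\sqrt{1/(3\kappa)}$, and $g(t)=g(-t)$ for $t<0$; $G(t)=\int_0^tg(s)\,ds$, and $G^{-1}$ is the inverse of $G$. $J_\kappa$ is $C^1$ on $H^1(\mathbb{R}^N)$ with $J_\kappa'(v)\psi=\int_{\mathbb{R}^N}\big[\nabla v\cdot\nabla\psi+V(x)\frac{G^{-1}(v)}{g(G^{-1}(v))}\psi-\frac{|G^{-1}(v)|^{q-2}G^{-1}(v)}{g(G^{-1}(v))}\psi\big]dx$. *)

theory Defs
  imports "HOL-Analysis.Analysis"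
begin

definition gk :: "real \<Rightarrow> real \<Rightarrow> real" where
  "gk \<kappa> t = (if \<bar>t\<bar> < sqrt (1 / (3 * \<kappa>)) then sqrt (1 - \<kappa> * t\<^sup>2)
               else 1 / (3 * sqrt (2 * \<kappa>) * \<bar>t\<bar>) + sqrt (1 / 6))"

definition Gk :: "real \<Rightarrow> real \<Rightarrow> real" where
  "Gk \<kappa> t = (LBINT s=0..t. gk \<kappa> s)"

definition Ginvk :: "real \<Rightarrow> real \<Rightarrow> real" where
  "Ginvk \<kappa> = inv (Gk \<kappa>)"

definition pd :: "'n::finite \<Rightarrow> (real^'n \<Rightarrow> real) \<Rightarrow> real^'n \<Rightarrow> real" where
  "pd i f x = deriv (\<lambda>t. f (x + t *\<^sub>R axis i 1)) 0"

definition has_pd :: "'n::finite \<Rightarrow> (real^'n \<Rightarrow> real) \<Rightarrow> real^'n \<Rightarrow> bool" where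
  "has_pd i f x \<longleftrightarrow> (\<lambda>t. f (x + t *\<^sub>R axis i 1)) differentiable (at 0)"

fun pds :: "'n::finite list \<Rightarrow> (real^'n \<Rightarrow> real) \<Rightarrow> real^'n \<Rightarrow> real" where
  "pds [] f = f"
| "pds (i # is) f = pd i (pds is f)"

definition C2 :: "(real^'n::finite \<Rightarrow> real) \<Rightarrow> bool" where
  "C2 f \<longleftrightarrow> (\<forall>is. length is \<le> 2 \<longrightarrow> continuous_on UNIV (pds is f)) \<and>
            (\<forall>is i x. length is \<le> 1 \<longrightarrow> has_pd i (pds is f) x)"

definition smooth :: "(real^'n::finite \<Rightarrow> real) \<Rightarrow> bool" where
  "smooth f \<longleftrightarrow> (\<forall>is. continuous_on UNIV (pds is f)) \<and> (\<forall>is i x. has_pd i (pds is f) x)"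

definition test_fun :: "(real^'n::finite \<Rightarrow> real) \<Rightarrow> bool" where
  "test_fun \<phi> \<longleftrightarrow> smooth \<phi> \<and> compact (closure {x. \<phi> x \<noteq> 0})"

definition L2 :: "(real^'n::finite \<Rightarrow> real) \<Rightarrow> bool" where
  "L2 f \<longleftrightarrow> f \<in> borel_measurable lebesgue \<and> integrable lebesgue (\<lambda>x. (f x)\<^sup>2)"

definition weak_pd :: "'n::finite \<Rightarrow> (real^'n \<Rightarrow> real) \<Rightarrow> (real^'n \<Rightarrow> real) \<Rightarrow> bool" where
  "weak_pd i v w \<longleftrightarrow> (\<forall>\<phi>. test_fun \<phi> \<longrightarrow>
      integrable lebesgue (\<lambda>x. v x * pd i \<phi> x) \<and> integrable lebesgue (\<lambda>x. w x * \<phi> x) \<and>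
      (\<integral>x. v x * pd i \<phi> x \<partial>lebesgue) = - (\<integral>x. w x * \<phi> x \<partial>lebesgue))"

definition H1 :: "(real^'n::finite \<Rightarrow> real) set" where
  "H1 = {v. L2 v \<and> (\<forall>i. \<exists>w. L2 w \<and> weak_pd i v w)}"

definition weak_grad :: "(real^'n::finite \<Rightarrow> real) \<Rightarrow> 'n \<Rightarrow> real^'n \<Rightarrow> real" where
  "weak_grad v i = (SOME w. L2 w \<and> weak_pd i v w)"

definition J :: "real \<Rightarrow> real \<Rightarrow> (real^'n::finite \<Rightarrow> real) \<Rightarrow> (real^'n \<Rightarrow> real) \<Rightarrow> real" where
  "J \<kappa> q V v = 1/2 * (\<integral>x. (\<Sum>i\<in>UNIV. (weak_grad v i x)\<^sup>2) \<partial>lebesgue)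
      + 1/2 * (\<integral>x. V x * \<bar>Ginvk \<kappa> (v x)\<bar>\<^sup>2 \<partial>lebesgue)
      - 1/q * (\<integral>x. \<bar>Ginvk \<kappa> (v x)\<bar> powr q \<partial>lebesgue)"

definition J_deriv :: "real \<Rightarrow> real \<Rightarrow> (real^'n::finite \<Rightarrow> real) \<Rightarrow> (real^'n \<Rightarrow> real)
     \<Rightarrow> (real^'n \<Rightarrow> real) \<Rightarrow> real" where
  "J_deriv \<kappa> q V v \<psi> = (\<integral>x. (\<Sum>i\<in>UNIV. weak_grad v i x * weak_grad \<psi> i x)
      + V x * Ginvk \<kappa> (v x) / gk \<kappa> (Ginvk \<kappa> (v x)) * \<psi> x
      - \<bar>Ginvk \<kappa> (v x)\<bar> powr (q - 2) * Ginvk \<kappa> (v x) / gk \<kappa> (Ginvk \<kappa> (v x)) * \<psi> x \<partial>lebesgue)"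

definition critical_point :: "real \<Rightarrow> real \<Rightarrow> (real^'n::finite \<Rightarrow> real) \<Rightarrow> (real^'n \<Rightarrow> real) \<Rightarrow> bool" where
  "critical_point \<kappa> q V v \<longleftrightarrow> v \<in> H1 \<and> (\<forall>\<psi>\<in>H1. J_deriv \<kappa> q V v \<psi> = 0)"

definition classical_solution :: "real \<Rightarrow> real \<Rightarrow> (real^'n::finite \<Rightarrow> real) \<Rightarrow> (real^'n \<Rightarrow> real) \<Rightarrow> bool" where
  "classical_solution \<kappa> q V u \<longleftrightarrow> C2 u \<and> (\<forall>x.
      - (\<Sum>i\<in>UNIV. pd i (\<lambda>y. (gk \<kappa> (u y))\<^sup>2 * pd i u y) x)
      + gk \<kappa> (u x) * deriv (gk \<kappa>) (u x) * (\<Sum>i\<in>UNIV. (pd i u x)\<^sup>2)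
      + V x * u x = \<bar>u x\<bar> powr (q - 2) * u x)"

end

theory Submission
  imports Defs "HOL-Computational_Algebra.Polynomial"
begin

text \<open>
  Since \<open>v\<close> is \<open>C\<^sup>2\<close>, its weak derivatives agree almost everywhere with the classical ones, so
  testing \<open>J'\<^sub>\<kappa>(v) = 0\<close> against smooth compactly supported \<open>\<phi>\<close> and integrating by parts gives
  \<open>\<integral> (h - \<Delta>v) \<phi> = 0\<close> with the continuous reaction term \<open>h = (V u - |u|\<^sup>q\<^sup>-\<^sup>2 u) / g(u)\<close>,
  \<open>u = G\<^sup>-\<^sup>1(v)\<close>. By the fundamental lemma of the calculus of variations \<open>\<Delta>v = h\<close> everywhere.
  As \<open>g\<close> is \<open>C\<^sup>1\<close> and positive, \<open>G\<^sup>-\<^sup>1\<close> is \<open>C\<^sup>2\<close> with \<open>(G\<^sup>-\<^sup>1)' = 1 / g(G\<^sup>-\<^sup>1)\<close>, so \<open>u\<close> is \<open>C\<^sup>2\<close>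
  with \<open>\<nabla>u = \<nabla>v / g(u)\<close>; then \<open>div(g\<^sup>2(u)\<nabla>u) = div(g(u)\<nabla>v) = g(u)\<Delta>v + g'(u)g(u)|\<nabla>u|\<^sup>2\<close>,
  which turns \<open>\<Delta>v = h\<close> into the equation for \<open>u\<close>. Finally \<open>g > 1/\<surd>6\<close> bounds \<open>G\<^sup>-\<^sup>1\<close> and
  its derivative linearly, so \<open>u \<in> H\<^sup>1\<close>.

  The test functions needed for the fundamental lemma are built from the smooth step
  function \<open>exp(-1/t)\<close>.
\<close>

section \<open>A smooth step function\<close>

definition exp_inv :: "real poly \<Rightarrow> real \<Rightarrow> real" where
  "exp_inv p t = (if 0 < t then poly p (1/t) * exp (-1/t) else 0)"

text \<open>\<open>(p(1/t) e\<^sup>-\<^sup>1\<^sup>/\<^sup>t)' = r(1/t) e\<^sup>-\<^sup>1\<^sup>/\<^sup>t\<close> with \<open>r(s) = s\<^sup>2 (p(s) - p'(s))\<close>, and each of these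
  functions has derivative \<open>0\<close> at \<open>0\<close>, so the family is closed under differentiation.\<close>

definition exp_inv_pderiv :: "real poly \<Rightarrow> real poly" where
  "exp_inv_pderiv p = [:0,0,1:] * (p - pderiv p)"

lemma poly_times_exp_neg_tendsto_0:
  fixes p :: "real poly"
  shows "((\<lambda>y. poly p y * exp (-y)) \<longlongrightarrow> 0) at_top"
proof -
  have "((\<lambda>y. \<Sum>i\<le>degree p. coeff p i * (y ^ i / exp y)) \<longlongrightarrow> (\<Sum>i\<le>degree p. coeff p i * 0)) at_top"
    by (intro tendsto_sum tendsto_mult tendsto_const tendsto_power_div_exp_0)
  moreover have "poly p y * exp (-y) = (\<Sum>i\<le>degree p. coeff p i * (y ^ i / exp y))" for y
    by (simp add: poly_altdef exp_minus divide_inverse sum_distrib_right mult.assoc)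
  ultimately show ?thesis by simp
qed

lemma exp_inv_div_tendsto_0: "((\<lambda>s. exp_inv p s / s) \<longlongrightarrow> 0) (at_right 0)"
proof -
  have lim: "((\<lambda>y. poly ([:0,1:] * p) y * exp (-y)) \<longlongrightarrow> 0) at_top"
    by (rule poly_times_exp_neg_tendsto_0)
  have inv: "filterlim (\<lambda>s::real. 1/s) at_top (at_right 0)"
    using filterlim_inverse_at_top_right by (simp add: inverse_eq_divide)
  have "((\<lambda>s. poly ([:0,1:] * p) (1/s) * exp (-(1/s))) \<longlongrightarrow> 0) (at_right 0)"
    using filterlim_compose[OF lim inv] by simp
  moreover have "\<forall>\<^sub>F s in at_right 0. poly ([:0,1:] * p) (1/s) * exp (-(1/s)) = exp_inv p s / s"
    by (rule eventually_at_rightI[where b=1]) (auto simp: exp_inv_def)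
  ultimately show ?thesis by (rule Lim_transform_eventually)
qed

lemma has_real_derivative_exp_inv:
  "(exp_inv p has_real_derivative exp_inv (exp_inv_pderiv p) t) (at t)"
proof (cases "0 < t")
  case True
  have deriv: "((\<lambda>t. poly p (1/t) * exp (-1/t)) has_real_derivative
      poly (pderiv p) (1/t) * (- 1/t^2) * exp (-1/t) + exp (-1/t) * (1/t^2) * poly p (1/t)) (at t)"
  proof (rule DERIV_mult[OF DERIV_chain2[OF poly_DERIV]])
    show "((\<lambda>t. 1/t) has_real_derivative -1/t^2) (at t)"
      "((\<lambda>t. exp (-1/t)) has_real_derivative exp (-1/t) * (1/t^2)) (at t)"
      using True by (auto intro!: derivative_eq_intros simp: power2_eq_square)
  qed
  have eq: "poly (pderiv p) (1/t) * (- 1/t^2) * exp (-1/t) + exp (-1/t) * (1/t^2) * poly p (1/t)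
      = exp_inv (exp_inv_pderiv p) t"
    using True by (simp add: exp_inv_def exp_inv_pderiv_def algebra_simps power2_eq_square)
  show ?thesis
  proof (rule has_field_derivative_transform_within_open[where S="{0<..}"])
    show "poly p (1/x) * exp (-1/x) = exp_inv p x" if "x \<in> {0<..}" for x
      using that by (simp add: exp_inv_def)
  qed (use deriv eq True in auto)
next
  case False
  show ?thesis
  proof (cases "t < 0")
    case True
    show ?thesis
    proof (rule has_field_derivative_transform_within_open[where S="{..<0}" and f="\<lambda>_. 0"])
      show "((\<lambda>_. 0) has_real_derivative exp_inv (exp_inv_pderiv p) t) (at t)"
        using True by (simp add: exp_inv_def)
    qed (use True in \<open>auto simp: exp_inv_def\<close>)
  next
    case False
    with \<open>\<not> 0 < t\<close> have t0: "t = 0" by simp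
    have "((\<lambda>s. (exp_inv p (0 + s) - exp_inv p 0) / s) \<longlongrightarrow> 0) (at 0)"
    proof (rule filterlim_split_at)
      show "((\<lambda>s. (exp_inv p (0 + s) - exp_inv p 0) / s) \<longlongrightarrow> 0) (at_right 0)"
        using exp_inv_div_tendsto_0[of p] by (simp add: exp_inv_def)
      have "\<forall>\<^sub>F s in at_left 0. (exp_inv p (0 + s) - exp_inv p 0) / s = 0"
        by (rule eventually_at_leftI[where a="-1"]) (auto simp: exp_inv_def)
      then show "((\<lambda>s. (exp_inv p (0 + s) - exp_inv p 0) / s) \<longlongrightarrow> 0) (at_left 0)"
        by (rule tendsto_eventually)
    qed
    moreover have "exp_inv (exp_inv_pderiv p) 0 = 0" by (simp add: exp_inv_def)
    ultimately show ?thesis unfolding t0 DERIV_def by simp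
  qed
qed

lemma continuous_on_exp_inv: "continuous_on S (exp_inv p)"
  by (intro continuous_at_imp_continuous_on ballI DERIV_isCont[OF has_real_derivative_exp_inv])

lemma exp_inv_1: "exp_inv 1 t = (if 0 < t then exp (-1/t) else 0)"
  by (simp add: exp_inv_def)

lemma exp_inv_1_mono: "0 < s \<Longrightarrow> s \<le> t \<Longrightarrow> exp_inv 1 s \<le> exp_inv 1 t"
  by (simp add: exp_inv_1 divide_simps)

lemma exp_inv_1_tendsto_1: "0 < s \<Longrightarrow> (\<lambda>n. exp_inv 1 (real (Suc n) * s)) \<longlonglongrightarrow> 1"
proof -
  assume s: "0 < s"
  have "(\<lambda>n. exp (- (inverse s * inverse (real (Suc n))))) \<longlonglongrightarrow> exp (- (inverse s * 0))"
    by (intro tendsto_intros LIMSEQ_inverse_real_of_nat)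
  moreover have "exp_inv 1 (real (Suc n) * s) = exp (- (inverse s * inverse (real (Suc n))))" for n
    using s by (simp add: exp_inv_1 field_simps add_pos_nonneg)
  ultimately show ?thesis by simp
qed

lemma has_pdI:
  assumes "((\<lambda>t. f (x + t *\<^sub>R axis i 1)) has_real_derivative D) (at 0)"
  shows "has_pd i f x" "pd i f x = D"
  using assms unfolding has_pd_def pd_def
  by (auto simp: real_differentiable_def DERIV_imp_deriv)

lemma has_pdD:
  assumes "has_pd i f x"
  shows "((\<lambda>t. f (x + t *\<^sub>R axis i 1)) has_real_derivative pd i f x) (at 0)"
  using assms unfolding has_pd_def pd_def
  by (simp add: DERIV_deriv_iff_real_differentiable)

lemma has_real_derivative_along_axis:
  assumes "\<And>y. has_pd i f y"
  shows "((\<lambda>t. f (x + t *\<^sub>R axis i 1)) has_real_derivative pd i f (x + s *\<^sub>R axis i 1)) (at s)"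
proof -
  have "((\<lambda>t. f ((x + s *\<^sub>R axis i 1) + t *\<^sub>R axis i 1)) has_real_derivative
      pd i f (x + s *\<^sub>R axis i 1)) (at 0)"
    by (rule has_pdD[OF assms])
  then have "((\<lambda>t. f (x + (t + s) *\<^sub>R axis i 1)) has_real_derivative
      pd i f (x + s *\<^sub>R axis i 1)) (at 0)"
    by (simp add: algebra_simps)
  then have "((\<lambda>t. f (x + t *\<^sub>R axis i 1)) has_real_derivative
      pd i f (x + s *\<^sub>R axis i 1)) (at (0 + s))"
    by (subst DERIV_shift) simp
  then show ?thesis by simp
qed

lemma pd_const: "has_pd i (\<lambda>x. c) x" "pd i (\<lambda>x. c) x = 0"
  by (rule has_pdI, rule DERIV_const)+

lemma pd_component: "has_pd i (\<lambda>x. x $ j) x" "pd i (\<lambda>x. x $ j) x = (if j = i then 1 else 0)"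
proof -
  have "((\<lambda>t. (x + t *\<^sub>R axis i 1) $ j) has_real_derivative (if j = i then 1 else 0)) (at 0)"
    by (cases "j = i") (auto simp: axis_def intro!: derivative_eq_intros)
  then show "has_pd i (\<lambda>x. x $ j) x" "pd i (\<lambda>x. x $ j) x = (if j = i then 1 else 0)"
    by (rule has_pdI)+
qed

lemma pd_add:
  assumes "has_pd i f x" "has_pd i g x"
  shows "has_pd i (\<lambda>x. f x + g x) x" "pd i (\<lambda>x. f x + g x) x = pd i f x + pd i g x"
  using DERIV_add[OF has_pdD[OF assms(1)] has_pdD[OF assms(2)]] by (rule has_pdI)+

lemma pd_mult:
  assumes "has_pd i f x" "has_pd i g x"
  shows "has_pd i (\<lambda>x. f x * g x) x" "pd i (\<lambda>x. f x * g x) x = pd i f x * g x + f x * pd i g x"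
proof -
  have "((\<lambda>t. f (x + t *\<^sub>R axis i 1) * g (x + t *\<^sub>R axis i 1)) has_real_derivative
      pd i f x * g (x + 0 *\<^sub>R axis i 1) + pd i g x * f (x + 0 *\<^sub>R axis i 1)) (at 0)"
    by (rule DERIV_mult[OF has_pdD[OF assms(1)] has_pdD[OF assms(2)]])
  then show "has_pd i (\<lambda>x. f x * g x) x" "pd i (\<lambda>x. f x * g x) x = pd i f x * g x + f x * pd i g x"
    by (auto dest: has_pdI simp: algebra_simps)
qed

lemma pd_chain:
  assumes "has_pd i f x" "(\<phi> has_real_derivative D) (at (f x))"
  shows "has_pd i (\<lambda>x. \<phi> (f x)) x" "pd i (\<lambda>x. \<phi> (f x)) x = D * pd i f x"
proof -
  have "(\<phi> has_real_derivative D) (at ((\<lambda>t. f (x + t *\<^sub>R axis i 1)) 0))"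
    using assms(2) by simp
  then have "((\<lambda>t. \<phi> (f (x + t *\<^sub>R axis i 1))) has_real_derivative D * pd i f x) (at 0)"
    using DERIV_chain2[OF _ has_pdD[OF assms(1)]] by simp
  then show "has_pd i (\<lambda>x. \<phi> (f x)) x" "pd i (\<lambda>x. \<phi> (f x)) x = D * pd i f x"
    by (rule has_pdI)+
qed

lemma pd_eq_0_if_locally_0:
  fixes g :: "real^'n::finite \<Rightarrow> real"
  assumes "e > 0" "\<And>y. y \<in> ball x e \<Longrightarrow> g y = 0" "has_pd i g x"
  shows "pd i g x = 0"
proof -
  have "((\<lambda>t. g (x + t *\<^sub>R axis i 1)) has_real_derivative 0) (at 0)"
  proof (rule has_field_derivative_transform_within_open[where f="\<lambda>_. 0" and S="ball 0 e"])
    show "0 = g (x + t *\<^sub>R axis i 1)" if "t \<in> ball 0 e" for t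
      using that by (intro assms(2)[symmetric]) (auto simp: dist_norm)
  qed (use assms(1) in auto)
  then show ?thesis using has_pdD[OF assms(3)] DERIV_unique by blast
qed

lemma pd_eq_0_outside_ball:
  fixes g :: "real^'n::finite \<Rightarrow> real"
  assumes "\<And>y. r < norm y \<Longrightarrow> g y = 0" "r < norm x" "has_pd i g x"
  shows "pd i g x = 0"
proof (rule pd_eq_0_if_locally_0[where e="norm x - r"])
  show "g y = 0" if "y \<in> ball x (norm x - r)" for y
    using that norm_triangle_ineq2[of x y] by (intro assms(1)) (auto simp: dist_norm)
qed (use assms in auto)

inductive_set smooth_alg :: "(real^'n::finite \<Rightarrow> real) set" where
  const: "(\<lambda>x. c) \<in> smooth_alg"
| component: "(\<lambda>x. x $ j) \<in> smooth_alg"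
| add: "f \<in> smooth_alg \<Longrightarrow> g \<in> smooth_alg \<Longrightarrow> (\<lambda>x. f x + g x) \<in> smooth_alg"
| mult: "f \<in> smooth_alg \<Longrightarrow> g \<in> smooth_alg \<Longrightarrow> (\<lambda>x. f x * g x) \<in> smooth_alg"
| exp_inv: "f \<in> smooth_alg \<Longrightarrow> (\<lambda>x. exp_inv p (f x)) \<in> smooth_alg"

lemma smooth_alg_pd:
  assumes "f \<in> smooth_alg"
  shows "continuous_on UNIV f \<and> (\<forall>i x. has_pd i f x) \<and> (\<forall>i. pd i f \<in> smooth_alg)"
  using assms
proof induction
  case (const c)
  have "pd i (\<lambda>x::real^'a. c) = (\<lambda>x. 0)" for i by (rule ext) (rule pd_const)
  then show ?case using pd_const by (auto intro: smooth_alg.const)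
next
  case (component j)
  have "pd i (\<lambda>x::real^'a. x $ j) = (\<lambda>x. if j = i then 1 else 0)" for i
    by (rule ext) (rule pd_component)
  then show ?case
    using pd_component by (auto intro: smooth_alg.const linear_continuous_on)
next
  case (add f g)
  have f: "\<And>i x. has_pd i f x" and g: "\<And>i x. has_pd i g x" using add.IH by blast+
  have "pd i (\<lambda>x. f x + g x) = (\<lambda>x. pd i f x + pd i g x)" for i
    by (intro ext pd_add f g)
  then show ?case
    using add.IH pd_add(1)[OF f g] by (auto intro!: smooth_alg.add continuous_on_add)
next
  case (mult f g)
  have f: "\<And>i x. has_pd i f x" and g: "\<And>i x. has_pd i g x" using mult.IH by blast+
  have "pd i (\<lambda>x. f x * g x) = (\<lambda>x. pd i f x * g x + f x * pd i g x)" for i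
    by (intro ext pd_mult f g)
  then show ?case
    using mult.IH mult.hyps pd_mult(1)[OF f g]
    by (auto intro!: smooth_alg.add smooth_alg.mult continuous_on_mult)
next
  case (exp_inv f p)
  have f: "\<And>i x. has_pd i f x" using exp_inv.IH by blast
  have "pd i (\<lambda>x. exp_inv p (f x)) = (\<lambda>x. exp_inv (exp_inv_pderiv p) (f x) * pd i f x)" for i
    by (intro ext pd_chain(2)[OF f has_real_derivative_exp_inv])
  moreover have "continuous_on UNIV (\<lambda>x. exp_inv p (f x))"
    using exp_inv.IH continuous_on_compose2[OF continuous_on_exp_inv[of UNIV p], of UNIV f] by auto
  ultimately show ?case
    using exp_inv.IH exp_inv.hyps pd_chain(1)[OF f has_real_derivative_exp_inv]
    by (auto intro!: smooth_alg.mult smooth_alg.exp_inv)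
qed

lemma smooth_alg_pds: "f \<in> smooth_alg \<Longrightarrow> pds is f \<in> smooth_alg"
  by (induction "is") (auto dest: smooth_alg_pd)

lemma smooth_alg_smooth: "f \<in> smooth_alg \<Longrightarrow> smooth f"
  unfolding smooth_def using smooth_alg_pds smooth_alg_pd by blast

lemma smooth_alg_prod:
  "finite S \<Longrightarrow> (\<And>j. j \<in> S \<Longrightarrow> f j \<in> smooth_alg) \<Longrightarrow> (\<lambda>x. \<Prod>j\<in>S. f j x) \<in> smooth_alg"
  by (induction S rule: finite_induct) (auto intro: smooth_alg.const smooth_alg.mult)

lemma smooth_alg_affine: "(\<lambda>x. c * (x $ j) + d) \<in> smooth_alg"
  by (intro smooth_alg.add smooth_alg.mult smooth_alg.const smooth_alg.component)


lemma continuous_imp_lebesgue_measurable: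
  "continuous_on UNIV (f::real^'n::finite \<Rightarrow> real) \<Longrightarrow> f \<in> borel_measurable lebesgue"
  by (simp add: borel_measurable_continuous_onI measurable_completion)

lemma integrable_continuous_vanishing_outside_ball:
  fixes f :: "real^'n::finite \<Rightarrow> real"
  assumes "continuous_on UNIV f" "\<And>x. r < norm x \<Longrightarrow> f x = 0"
  shows "integrable lebesgue f"
proof -
  have "integrable lborel (\<lambda>x. indicat_real (cball 0 r) x *\<^sub>R f x)"
    by (rule borel_integrable_compact) (auto intro: continuous_on_subset[OF assms(1)])
  moreover have "(\<lambda>x. indicat_real (cball 0 r) x *\<^sub>R f x) = f"
    using assms(2) by (force simp: indicator_def)
  ultimately show ?thesis
    using assms(1) by (simp add: integrable_completion borel_measurable_continuous_onI)
qed

lemma bounded_continuous_vanishing_outside_ball: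
  fixes f :: "real^'n::finite \<Rightarrow> real"
  assumes "continuous_on UNIV f" "\<And>x. r < norm x \<Longrightarrow> f x = 0"
  obtains B where "\<And>x. \<bar>f x\<bar> \<le> B"
proof -
  have "bounded (f ` cball 0 r)"
    by (intro compact_imp_bounded compact_continuous_image continuous_on_subset[OF assms(1)]) auto
  then obtain B where B: "\<forall>y\<in>f ` cball 0 r. norm y \<le> B" unfolding bounded_iff by blast
  have "\<bar>f x\<bar> \<le> max B 0" for x
    using B[rule_format, of "f x"] assms(2)[of x] by (cases "norm x \<le> r") auto
  then show ?thesis using that by blast
qed

lemma integral_lebesgue_translate:
  fixes f :: "real^'n::finite \<Rightarrow> real"
  assumes "continuous_on UNIV f"
  shows "(\<integral>x. f (a + x) \<partial>lebesgue) = (\<integral>x. f x \<partial>lebesgue)"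
proof -
  have m: "f \<in> borel_measurable borel"
    using assms by (rule borel_measurable_continuous_onI)
  have m_translate: "(\<lambda>x. f (a + x)) \<in> borel_measurable borel"
    by (intro borel_measurable_continuous_onI continuous_on_compose2[OF assms] continuous_intros) auto
  have "lborel = density (distr lborel borel (\<lambda>x::real^'n. a + 1 *\<^sub>R x)) (\<lambda>_. \<bar>1::real\<bar>^DIM(real^'n))"
    by (rule lborel_affine) simp
  then have "lborel = distr lborel borel (\<lambda>x::real^'n. a + x)"
    by (simp add: density_1)
  then have "(\<integral>x. f x \<partial>lborel) = (\<integral>x. f x \<partial>distr lborel borel (\<lambda>x::real^'n. a + x))"
    by simp
  also have "\<dots> = (\<integral>x. f (a + x) \<partial>lborel)"
    by (rule integral_distr) (auto simp: m)
  finally show ?thesis using m m_translate by (simp add: integral_completion)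
qed

lemma difference_quotient_bounded:
  fixes g :: "real^'n::finite \<Rightarrow> real"
  assumes "\<And>y. has_pd i g y" "\<And>y. \<bar>pd i g y\<bar> \<le> B" "0 < h"
  shows "\<bar>(g (x + h *\<^sub>R axis i 1) - g x) / h\<bar> \<le> B"
proof -
  obtain z where "g (x + h *\<^sub>R axis i 1) - g (x + 0 *\<^sub>R axis i 1) = (h - 0) * pd i g (x + z *\<^sub>R axis i 1)"
    using MVT2[of 0 h "\<lambda>t. g (x + t *\<^sub>R axis i 1)" "\<lambda>t. pd i g (x + t *\<^sub>R axis i 1)"] assms(3)
      has_real_derivative_along_axis[OF assms(1)] by blast
  then show ?thesis using assms(2,3) by simp
qed

text \<open>The difference quotients converge dominatedly to \<open>pd i g\<close>, and their integrals vanish by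
  translation invariance of Lebesgue measure.\<close>

lemma integral_pd_eq_0:
  fixes g :: "real^'n::finite \<Rightarrow> real"
  assumes c: "continuous_on UNIV g" and h: "\<And>x. has_pd i g x" and cp: "continuous_on UNIV (pd i g)"
    and s: "\<And>x. r < norm x \<Longrightarrow> g x = 0"
  shows "(\<integral>x. pd i g x \<partial>lebesgue) = 0"
proof -
  define e :: "real^'n" where "e = axis i 1"
  have "pd i g x = 0" if "r < norm x" for x
    using pd_eq_0_outside_ball[OF s that h] .
  then obtain B where B: "\<And>x. \<bar>pd i g x\<bar> \<le> B"
    using bounded_continuous_vanishing_outside_ball[OF cp] by blast
  define hn where "hn n = 1 / real (Suc n)" for n
  have hn: "0 < hn n" "hn n \<le> 1" for n by (simp_all add: hn_def)
  define D where "D n x = (g (x + hn n *\<^sub>R e) - g x) / hn n" for n x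
  have cshift: "continuous_on UNIV (\<lambda>x. g (x + a))" for a
    by (intro continuous_on_compose2[OF c] continuous_intros) auto
  have integral_D: "(\<integral>x. D n x \<partial>lebesgue) = 0" for n
  proof -
    have "integrable lebesgue (\<lambda>x. g (x + hn n *\<^sub>R e))"
    proof (rule integrable_continuous_vanishing_outside_ball[OF cshift])
      show "g (x + hn n *\<^sub>R e) = 0" if "r + norm (hn n *\<^sub>R e) < norm x" for x
        using that norm_triangle_ineq2[of x "- (hn n *\<^sub>R e)"] by (intro s) simp
    qed
    moreover have "integrable lebesgue g"
      by (rule integrable_continuous_vanishing_outside_ball[OF c s])
    moreover have "(\<integral>x. g (x + hn n *\<^sub>R e) \<partial>lebesgue) = (\<integral>x. g x \<partial>lebesgue)"
      using integral_lebesgue_translate[OF c, of "hn n *\<^sub>R e"] by (simp add: add.commute)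
    ultimately show ?thesis by (simp add: D_def)
  qed
  have D_tendsto: "(\<lambda>n. D n x) \<longlonglongrightarrow> pd i g x" for x
  proof -
    have "((\<lambda>t. (g (x + t *\<^sub>R e) - g x) / t) \<longlongrightarrow> pd i g x) (at 0)"
      using has_pdD[OF h, of x] unfolding DERIV_def e_def by simp
    moreover have "filterlim hn (at 0) sequentially"
    proof (rule filterlim_atI)
      show "hn \<longlonglongrightarrow> 0"
        unfolding hn_def using LIMSEQ_inverse_real_of_nat by (simp add: inverse_eq_divide)
    qed (use hn in \<open>simp add: less_imp_neq[symmetric]\<close>)
    ultimately show ?thesis unfolding D_def by (rule filterlim_compose)
  qed
  have D_bound: "\<bar>D n x\<bar> \<le> B * indicator (cball 0 (r + 1)) x" for n x
  proof (cases "norm x \<le> r + 1")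
    case False
    then have "g x = 0" "g (x + hn n *\<^sub>R e) = 0"
      using hn[of n] norm_triangle_ineq2[of x "- (hn n *\<^sub>R e)"] by (auto intro!: s simp: e_def)
    then show ?thesis using False by (simp add: D_def)
  next
    case True
    then show ?thesis
      using difference_quotient_bounded[OF h B hn(1)] by (simp add: D_def e_def)
  qed
  have dominating: "integrable lebesgue (\<lambda>x. B * indicator (cball (0::real^'n) (r + 1)) x)"
    by (intro integrable_mult_right integrable_real_indicator)
      (auto intro!: emeasure_bounded_finite[simplified])
  have "(\<lambda>n. \<integral>x. D n x \<partial>lebesgue) \<longlonglongrightarrow> (\<integral>x. pd i g x \<partial>lebesgue)"
  proof (rule integral_dominated_convergence[OF _ _ dominating])
    show "D n \<in> borel_measurable lebesgue" for n
      using hn[of n] unfolding D_def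
      by (intro continuous_imp_lebesgue_measurable continuous_intros cshift c) simp
  qed (use D_tendsto D_bound in \<open>auto intro: continuous_imp_lebesgue_measurable cp\<close>)
  then show ?thesis using integral_D by (simp add: LIMSEQ_const_iff)
qed

lemma test_funD:
  assumes "test_fun \<phi>"
  shows "continuous_on UNIV \<phi>" "\<And>i x. has_pd i \<phi> x" "\<And>i. continuous_on UNIV (pd i \<phi>)"
  using assms unfolding test_fun_def smooth_def
  by (metis pds.simps(1), metis pds.simps(1), metis pds.simps)

lemma test_fun_bounded_support:
  assumes "test_fun \<phi>"
  obtains r where "\<And>x. r < norm x \<Longrightarrow> \<phi> x = 0"
proof -
  have "bounded (closure {x. \<phi> x \<noteq> 0})"
    using assms unfolding test_fun_def by (blast intro: compact_imp_bounded)
  then obtain r where "\<And>y. y \<in> closure {x. \<phi> x \<noteq> 0} \<Longrightarrow> norm y \<le> r"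
    by (auto simp: bounded_iff)
  then have "\<phi> x = 0" if "r < norm x" for x
    using that closure_subset[of "{x. \<phi> x \<noteq> 0}"] by force
  then show ?thesis using that by blast
qed

lemma integration_by_parts_test_fun:
  fixes f \<phi> :: "real^'n::finite \<Rightarrow> real"
  assumes cf: "continuous_on UNIV f" and hf: "\<And>x. has_pd i f x" and cpf: "continuous_on UNIV (pd i f)"
    and t: "test_fun \<phi>"
  shows "integrable lebesgue (\<lambda>x. f x * pd i \<phi> x)" "integrable lebesgue (\<lambda>x. pd i f x * \<phi> x)"
    "(\<integral>x. f x * pd i \<phi> x \<partial>lebesgue) = - (\<integral>x. pd i f x * \<phi> x \<partial>lebesgue)"
proof -
  obtain r where r: "\<And>x. r < norm x \<Longrightarrow> \<phi> x = 0" using test_fun_bounded_support[OF t] by blast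
  note c\<phi> = test_funD(1)[OF t] and h\<phi> = test_funD(2)[OF t] and cp\<phi> = test_funD(3)[OF t]
  have pr: "pd i \<phi> x = 0" if "r < norm x" for x by (rule pd_eq_0_outside_ball[OF r that h\<phi>])
  show i1: "integrable lebesgue (\<lambda>x. f x * pd i \<phi> x)"
    by (rule integrable_continuous_vanishing_outside_ball[where r=r])
      (auto intro!: continuous_on_mult cf cp\<phi> simp: pr)
  show i2: "integrable lebesgue (\<lambda>x. pd i f x * \<phi> x)"
    by (rule integrable_continuous_vanishing_outside_ball[where r=r])
      (auto intro!: continuous_on_mult cpf c\<phi> simp: r)
  have e: "pd i (\<lambda>x. f x * \<phi> x) = (\<lambda>x. pd i f x * \<phi> x + f x * pd i \<phi> x)"
    by (rule ext, rule pd_mult(2)[OF hf h\<phi>])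
  have "(\<integral>x. pd i (\<lambda>x. f x * \<phi> x) x \<partial>lebesgue) = 0"
  proof (rule integral_pd_eq_0[where r=r])
    show "continuous_on UNIV (pd i (\<lambda>x. f x * \<phi> x))" unfolding e
      by (intro continuous_on_add continuous_on_mult cf c\<phi> cpf cp\<phi>)
  qed (use r pd_mult(1)[OF hf h\<phi>] in \<open>auto intro!: continuous_on_mult cf c\<phi>\<close>)
  then show "(\<integral>x. f x * pd i \<phi> x \<partial>lebesgue) = - (\<integral>x. pd i f x * \<phi> x \<partial>lebesgue)"
    unfolding e by (simp add: Bochner_Integration.integral_add[OF i2 i1])
qed

definition bump :: "real \<Rightarrow> real^'n::finite \<Rightarrow> real^'n \<Rightarrow> real^'n \<Rightarrow> real" where
  "bump n a b x = (\<Prod>j\<in>UNIV. exp_inv 1 (n * (x $ j - a $ j)) * exp_inv 1 (n * (b $ j - x $ j)))"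

lemma bump_eq_0: "0 < n \<Longrightarrow> x \<notin> box a b \<Longrightarrow> bump n a b x = 0"
proof -
  assume n: "0 < n" and "x \<notin> box a b"
  then obtain j where "\<not> (a $ j < x $ j \<and> x $ j < b $ j)" by (auto simp: mem_box_cart)
  then have "exp_inv 1 (n * (x $ j - a $ j)) * exp_inv 1 (n * (b $ j - x $ j)) = 0"
    using n by (auto simp: exp_inv_1 zero_less_mult_iff not_less)
  then show ?thesis unfolding bump_def by (intro prod_zero) auto
qed

lemma bump_bounds: "0 \<le> bump n a b x" "bump n a b x \<le> 1"
  unfolding bump_def by (auto intro!: prod_nonneg prod_le_1 mult_le_one simp: exp_inv_1)

lemma test_fun_bump: "0 < n \<Longrightarrow> test_fun (bump n a b)"
proof -
  assume n: "0 < n"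
  have "bump n a b = (\<lambda>x. \<Prod>j\<in>UNIV.
      exp_inv 1 (n * (x $ j) + - n * a $ j) * exp_inv 1 (- n * (x $ j) + n * b $ j))"
    by (simp add: bump_def algebra_simps fun_eq_iff)
  also have "\<dots> \<in> smooth_alg"
    by (intro smooth_alg_prod smooth_alg.mult smooth_alg.exp_inv smooth_alg_affine) auto
  finally have "smooth (bump n a b)"
    by (rule smooth_alg_smooth)
  moreover have "{x. bump n a b x \<noteq> 0} \<subseteq> cbox a b"
    using bump_eq_0[OF n] box_subset_cbox by blast
  then have "compact (closure {x. bump n a b x \<noteq> 0})"
    using bounded_subset[OF bounded_cbox] compact_closure by blast
  ultimately show ?thesis unfolding test_fun_def by blast
qed

lemma bump_tendsto_indicator:
  fixes a b x :: "real^'n::finite"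
  shows "(\<lambda>n. bump (real (Suc n)) a b x) \<longlonglongrightarrow> indicator (box a b) x"
proof (cases "x \<in> box a b")
  case True
  then have "(\<lambda>n. \<Prod>j\<in>UNIV. exp_inv 1 (real (Suc n) * (x $ j - a $ j)) * exp_inv 1 (real (Suc n) * (b $ j - x $ j)))
      \<longlonglongrightarrow> (\<Prod>j\<in>(UNIV::'n set). 1 * 1)"
    by (intro tendsto_prod tendsto_mult exp_inv_1_tendsto_1) (auto simp: mem_box_cart)
  then show ?thesis using True unfolding bump_def by simp
next
  case False
  then show ?thesis using bump_eq_0[OF _ False] by simp
qed

section \<open>The fundamental lemma of the calculus of variations\<close>

lemma integrable_indicator_cbox_if_test_integrable:
  fixes w :: "real^'n::finite \<Rightarrow> real"
  assumes wm[measurable]: "w \<in> borel_measurable lebesgue"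
    and int: "\<And>\<psi>. test_fun \<psi> \<Longrightarrow> integrable lebesgue (\<lambda>x. w x * \<psi> x)"
  shows "integrable lebesgue (\<lambda>x. w x * indicator (cbox a b) x)"
proof -
  define one :: "real^'n" where "one = (\<chi> j. 1)"
  define \<psi> where "\<psi> = bump 1 (a - one) (b + one)"
  define c where "c = (exp_inv 1 1 * exp_inv 1 1) ^ CARD('n)"
  have c: "c > 0" unfolding c_def by (simp add: exp_inv_1)
  have low: "c \<le> \<psi> x" if x: "x \<in> cbox a b" for x
  proof -
    have "c = (\<Prod>j\<in>(UNIV::'n set). exp_inv 1 1 * exp_inv 1 1)" by (simp add: c_def)
    also have "\<dots> \<le> \<psi> x" unfolding \<psi>_def bump_def
    proof (rule prod_mono)
      fix j :: 'n
      have "a $ j \<le> x $ j" "x $ j \<le> b $ j" using x by (auto simp: mem_box_cart)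
      then show "0 \<le> exp_inv 1 1 * exp_inv 1 1 \<and> exp_inv 1 1 * exp_inv 1 1
          \<le> exp_inv 1 (1 * (x $ j - (a - one) $ j)) * exp_inv 1 (1 * ((b + one) $ j - x $ j))"
        by (auto simp: one_def intro!: mult_mono exp_inv_1_mono) (simp_all add: exp_inv_1)
    qed
    finally show ?thesis .
  qed
  have "integrable lebesgue (\<lambda>x. w x * \<psi> x / c)"
    using int[OF test_fun_bump[of 1]] by (simp add: \<psi>_def)
  then show ?thesis
  proof (rule Bochner_Integration.integrable_bound)
    show "AE x in lebesgue. norm (w x * indicator (cbox a b) x) \<le> norm (w x * \<psi> x / c)"
    proof (rule AE_I2)
      fix x
      show "norm (w x * indicator (cbox a b) x) \<le> norm (w x * \<psi> x / c)"
      proof (cases "x \<in> cbox a b")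
        case True
        then have "\<bar>w x\<bar> * 1 \<le> \<bar>w x\<bar> * (\<psi> x / c)"
          using low c by (intro mult_left_mono) auto
        then show ?thesis using True c low[OF True] by (simp add: abs_mult)
      qed simp
    qed
  qed (intro borel_measurable_times wm borel_measurable_indicator, simp)
qed

lemma integral_indicator_box_eq_0:
  fixes w :: "real^'n::finite \<Rightarrow> real"
  assumes wm[measurable]: "w \<in> borel_measurable lebesgue"
    and int: "\<And>\<psi>. test_fun \<psi> \<Longrightarrow> integrable lebesgue (\<lambda>x. w x * \<psi> x)"
    and z: "\<And>\<psi>. test_fun \<psi> \<Longrightarrow> (\<integral>x. w x * \<psi> x \<partial>lebesgue) = 0"
  shows "(\<integral>x. w x * indicator (box a b) x \<partial>lebesgue) = 0"
proof -
  have "(\<lambda>n. \<integral>x. w x * bump (real (Suc n)) a b x \<partial>lebesgue)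
      \<longlonglongrightarrow> (\<integral>x. w x * indicator (box a b) x \<partial>lebesgue)"
  proof (rule integral_dominated_convergence)
    show "integrable lebesgue (\<lambda>x. \<bar>w x * indicator (cbox a b) x\<bar>)"
      by (rule integrable_abs[OF integrable_indicator_cbox_if_test_integrable[OF wm int]])
    show "(\<lambda>x. w x * indicator (box a b) x) \<in> borel_measurable lebesgue"
      by (intro borel_measurable_times wm borel_measurable_indicator) simp
    show "(\<lambda>x. w x * bump (real (Suc n)) a b x) \<in> borel_measurable lebesgue" for n
      using test_funD(1)[OF test_fun_bump[of "real (Suc n)" a b]]
      by (intro borel_measurable_times wm continuous_imp_lebesgue_measurable) auto
    show "AE x in lebesgue. (\<lambda>n. w x * bump (real (Suc n)) a b x) \<longlonglongrightarrow> w x * indicator (box a b) x"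
      by (intro AE_I2 tendsto_mult tendsto_const bump_tendsto_indicator)
    show "AE x in lebesgue. norm (w x * bump (real (Suc n)) a b x) \<le> \<bar>w x * indicator (cbox a b) x\<bar>" for n
    proof (rule AE_I2)
      fix x
      show "norm (w x * bump (real (Suc n)) a b x) \<le> \<bar>w x * indicator (cbox a b) x\<bar>"
      proof (cases "x \<in> box a b")
        case True
        then have "x \<in> cbox a b" using box_subset_cbox by blast
        then show ?thesis
          using bump_bounds[of "real (Suc n)" a b x] by (simp add: abs_mult mult_left_le)
      qed (simp add: bump_eq_0)
    qed
  qed
  moreover have "(\<integral>x. w x * bump (real (Suc n)) a b x \<partial>lebesgue) = 0" for n
    by (rule z[OF test_fun_bump]) simp
  ultimately show ?thesis by (simp add: LIMSEQ_const_iff)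
qed

lemma integral_indicator_borel_eq_0:
  fixes f :: "real^'n::finite \<Rightarrow> real"
  assumes f: "integrable lebesgue f" and f0: "(\<integral>x. f x \<partial>lebesgue) = 0"
    and box: "\<And>a b. (\<integral>x. f x * indicator (box a b) x \<partial>lebesgue) = 0"
    and A: "A \<in> sets borel"
  shows "(\<integral>x. indicator A x *\<^sub>R f x \<partial>lebesgue) = 0"
proof -
  have lebesgue_set: "B \<in> sets lebesgue" if "B \<in> sigma_sets UNIV (range (\<lambda>(a, b). box a b))"
    for B :: "(real^'n) set"
    using that unfolding sets_lborel[symmetric]
    by (metis borel_eq_box sets_completionI_sets sets_lborel sets_measure_of top_greatest Pow_UNIV)
  have "Int_stable (range (\<lambda>(a, b). box a b :: (real^'n) set))"
    unfolding Int_stable_def by (auto simp: box_Int_box)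
  moreover have "range (\<lambda>(a, b). box a b :: (real^'n) set) \<subseteq> Pow UNIV"
    by simp
  moreover have "A \<in> sigma_sets UNIV (range (\<lambda>(a, b). box a b))"
    using A unfolding borel_eq_box by simp
  ultimately show ?thesis
  proof (induction rule: sigma_sets_induct_disjoint)
    case (basic A)
    then show ?case using box by (auto simp: mult.commute)
  next
    case (compl A)
    have "(\<lambda>x. indicator (UNIV - A) x *\<^sub>R f x) = (\<lambda>x. f x - indicator A x *\<^sub>R f x)"
      by (auto simp: indicator_def)
    then show ?case
      using compl f0
        Bochner_Integration.integral_diff[OF f integrable_mult_indicator[OF lebesgue_set[OF compl(1)] f]]
      by simp
  next
    case (union A)
    have Al: "A i \<in> sets lebesgue" for i
      using union(2) lebesgue_set by auto
    have "(LINT x:(\<Union>i. A i)|lebesgue. f x) = (\<Sum>i. (LINT x:(A i)|lebesgue. f x))"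
    proof (rule lebesgue_integral_countable_add[OF Al])
      show "A i \<inter> A j = {}" if "i \<noteq> j" for i j
        using union(1) that by (auto simp: disjoint_family_on_def)
      have "(\<Union>i. A i) \<in> sets lebesgue"
        using Al by blast
      then show "set_integrable lebesgue (\<Union>i. A i) f"
        unfolding set_integrable_def by (rule integrable_mult_indicator[OF _ f])
    qed
    then show ?case using union(3) by (simp add: set_lebesgue_integral_def)
  qed simp_all
qed

lemma AE_eq_0_if_box_integrals_eq_0:
  fixes f :: "real^'n::finite \<Rightarrow> real"
  assumes f: "integrable lebesgue f" and f0: "(\<integral>x. f x \<partial>lebesgue) = 0"
    and box: "\<And>a b. (\<integral>x. f x * indicator (box a b) x \<partial>lebesgue) = 0"
  shows "AE x in lebesgue. f x = 0"
proof -
  have "(\<integral>x. indicator A x *\<^sub>R f x \<partial>lebesgue) = 0" if A: "A \<in> sets lebesgue" for A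
  proof -
    obtain S N N' where SN: "A = S \<union> N" "N \<subseteq> N'" "N' \<in> null_sets lborel" "S \<in> sets lborel"
      using sets_completionE[OF A] by blast
    have "AE x in lebesgue. x \<notin> N'"
      using SN(3) by (intro AE_completion AE_not_in)
    then have "AE x in lebesgue. indicator A x *\<^sub>R f x = indicator S x *\<^sub>R f x"
      by eventually_elim (use SN(1,2) in \<open>auto simp: indicator_def\<close>)
    then have "(\<integral>x. indicator A x *\<^sub>R f x \<partial>lebesgue) = (\<integral>x. indicator S x *\<^sub>R f x \<partial>lebesgue)"
      using A sets_completionI_sets[OF SN(4)] borel_measurable_integrable[OF f]
      by (intro integral_cong_AE) (auto intro!: borel_measurable_scaleR borel_measurable_indicator)
    also have "\<dots> = 0"
      using integral_indicator_borel_eq_0[OF f f0 box] SN(4) by simp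
    finally show ?thesis .
  qed
  then show ?thesis
    using density_unique_real[OF f integrable_zero] by (simp add: set_lebesgue_integral_def)
qed

lemma fundamental_lemma_calculus_of_variations:
  fixes w :: "real^'n::finite \<Rightarrow> real"
  assumes wm[measurable]: "w \<in> borel_measurable lebesgue"
    and int: "\<And>\<psi>. test_fun \<psi> \<Longrightarrow> integrable lebesgue (\<lambda>x. w x * \<psi> x)"
    and z: "\<And>\<psi>. test_fun \<psi> \<Longrightarrow> (\<integral>x. w x * \<psi> x \<partial>lebesgue) = 0"
  shows "AE x in lebesgue. w x = 0"
proof -
  have box: "(\<integral>x. w x * indicator (box a b) x \<partial>lebesgue) = 0" for a b
    by (rule integral_indicator_box_eq_0[OF wm int z])
  have local: "AE x in lebesgue. w x * indicator (box c d) x = 0" for c d :: "real^'n"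
  proof (rule AE_eq_0_if_box_integrals_eq_0)
    show "integrable lebesgue (\<lambda>x. w x * indicator (box c d) x)"
    proof (rule Bochner_Integration.integrable_bound[OF integrable_indicator_cbox_if_test_integrable[OF wm int]])
      show "AE x in lebesgue. norm (w x * indicator (box c d) x) \<le> norm (w x * indicator (cbox c d) x)"
        using box_subset_cbox[of c d] by (intro AE_I2) (auto simp: indicator_def)
    qed (auto intro!: borel_measurable_times borel_measurable_indicator)
    show "(\<integral>x. w x * indicator (box c d) x * indicator (box a b) x \<partial>lebesgue) = 0" for a b
      using box by (simp add: mult.assoc indicator_inter_arith[symmetric] box_Int_box)
  qed (rule box)
  have "AE x in lebesgue. \<forall>n::nat. w x * indicator (box (- (\<chi> j. real n)) (\<chi> j. real n)) x = 0"
    unfolding AE_all_countable using local by blast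
  then show ?thesis
  proof eventually_elim
    case (elim x)
    obtain n :: nat where n: "norm x < real n" using reals_Archimedean2 by blast
    have "- real n < x $ j \<and> x $ j < real n" for j
      using component_le_norm_cart[of x j] n by linarith
    then have "x \<in> box (- (\<chi> j. real n)) (\<chi> j. real n)"
      unfolding mem_box_cart by simp
    then show ?case using elim[rule_format, of n] by simp
  qed
qed


section \<open>The change of variables \<open>g\<close>, \<open>G\<close>, \<open>G\<^sup>-\<^sup>1\<close>\<close>

text \<open>\<open>g(t)\<close> depends on \<open>s = t\<^sup>2\<close> only; as a function of \<open>s\<close> its two branches meet at \<open>s = 1/(3\<kappa>)\<close>
  with equal values and equal first derivatives, which makes \<open>g\<close> a \<open>C\<^sup>1\<close> function.\<close>

definition g_inner :: "real \<Rightarrow> real \<Rightarrow> real" where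
  "g_inner k s = sqrt (1 - k * s)"

definition g_inner_deriv :: "real \<Rightarrow> real \<Rightarrow> real" where
  "g_inner_deriv k s = - k / (2 * sqrt (1 - k * s))"

definition g_outer :: "real \<Rightarrow> real \<Rightarrow> real" where
  "g_outer k s = 1 / (3 * sqrt (2 * k) * sqrt s) + sqrt (1/6)"

definition g_outer_deriv :: "real \<Rightarrow> real \<Rightarrow> real" where
  "g_outer_deriv k s = - 1 / (6 * sqrt (2 * k) * s * sqrt s)"

definition g_sq :: "real \<Rightarrow> real \<Rightarrow> real" where
  "g_sq k s = (if s < 1 / (3 * k) then g_inner k s else g_outer k s)"

definition g_sq_deriv :: "real \<Rightarrow> real \<Rightarrow> real" where
  "g_sq_deriv k s = (if s < 1 / (3 * k) then g_inner_deriv k s else g_outer_deriv k s)"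

definition dgk :: "real \<Rightarrow> real \<Rightarrow> real" where
  "dgk k t = g_sq_deriv k (t\<^sup>2) * (2 * t)"

lemma g_inner_eq_g_outer:
  assumes "k > 0"
  shows "g_inner k (1 / (3 * k)) = g_outer k (1 / (3 * k))"
proof -
  have a: "sqrt (2 * k) * sqrt (1 / (3 * k)) = sqrt (2/3)"
    using assms by (simp add: real_sqrt_mult[symmetric])
  have b: "1 - k * (1 / (3 * k)) = 2/3"
    using assms by simp
  have c: "sqrt (1/6) = 1 / (3 * sqrt (2/3))"
    by (rule real_sqrt_unique) (auto simp: power_divide power_mult_distrib)
  have d: "sqrt (2/3) = 2 * sqrt (1/6)"
    by (rule real_sqrt_unique) (auto simp: power_mult_distrib)
  show ?thesis
    unfolding g_inner_def g_outer_def b mult.assoc a using c d by simp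
qed

lemma g_inner_deriv_eq_g_outer_deriv:
  assumes "k > 0"
  shows "g_inner_deriv k (1 / (3 * k)) = g_outer_deriv k (1 / (3 * k))"
proof -
  have "sqrt (2 * k) * sqrt (1 / (3 * k)) = sqrt (2/3)"
    using assms by (simp add: real_sqrt_mult[symmetric])
  then have "6 * sqrt (2 * k) * (1 / (3 * k)) * sqrt (1 / (3 * k)) = 2 * sqrt (2/3) / k"
    using assms by (simp add: field_simps)
  then show ?thesis
    using assms by (simp add: g_inner_deriv_def g_outer_deriv_def field_simps)
qed

lemma has_real_derivative_g_inner:
  "k > 0 \<Longrightarrow> s < 1/k \<Longrightarrow> (g_inner k has_real_derivative g_inner_deriv k s) (at s within S)"
  unfolding g_inner_def[abs_def] g_inner_deriv_def
  by (rule derivative_eq_intros refl | simp add: field_simps)+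

lemma has_real_derivative_g_outer:
  "k > 0 \<Longrightarrow> s > 0 \<Longrightarrow> (g_outer k has_real_derivative g_outer_deriv k s) (at s within S)"
  unfolding g_outer_def[abs_def] g_outer_deriv_def
  by (rule derivative_eq_intros refl | simp add: field_simps power2_eq_square)+

lemma has_real_derivative_g_sq:
  assumes k: "k > 0"
  shows "(g_sq k has_real_derivative g_sq_deriv k s) (at s)"
proof -
  define s0 where "s0 = 1 / (3 * k)"
  have s0: "0 < s0" "s0 < 1/k" using k by (auto simp: s0_def field_simps)
  have cl: "closure {..<s0} = {..s0}" "closure {s0..} = {s0..}" by auto
  have i: "{..<s0} \<union> (closure {..<s0} \<inter> closure {s0..}) = {..s0}"
          "{s0..} \<union> (closure {..<s0} \<inter> closure {s0..}) = {s0..}" unfolding cl by auto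
  have "((\<lambda>x. if x \<in> {..<s0} then g_inner k x else g_outer k x) has_derivative
      (if s \<in> {..<s0} then (*) (g_inner_deriv k s) else (*) (g_outer_deriv k s))) (at s within ({..<s0} \<union> {s0..}))"
  proof (rule has_derivative_If_within_closures)
    show "(g_inner k has_derivative (*) (g_inner_deriv k s))
        (at s within {..<s0} \<union> (closure {..<s0} \<inter> closure {s0..}))"
      if "s \<in> {..<s0} \<union> (closure {..<s0} \<inter> closure {s0..})"
      using that s0 unfolding i
      by (intro has_real_derivative_g_inner[OF k, unfolded has_field_derivative_def]) auto
    show "(g_outer k has_derivative (*) (g_outer_deriv k s))
        (at s within {s0..} \<union> (closure {..<s0} \<inter> closure {s0..}))"
      if "s \<in> {s0..} \<union> (closure {..<s0} \<inter> closure {s0..})"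
      using that s0 unfolding i
      by (intro has_real_derivative_g_outer[OF k, unfolded has_field_derivative_def]) auto
    show "g_inner k s = g_outer k s" if "s \<in> closure {..<s0}" "s \<in> closure {s0..}"
      using that g_inner_eq_g_outer[OF k] unfolding cl by (auto simp: s0_def)
    show "(*) (g_inner_deriv k s) = (*) (g_outer_deriv k s)" if "s \<in> closure {..<s0}" "s \<in> closure {s0..}"
      using that g_inner_deriv_eq_g_outer_deriv[OF k] unfolding cl by (auto simp: s0_def)
  qed auto
  moreover have "{..<s0} \<union> {s0..} = UNIV" by auto
  moreover have "(\<lambda>x. if x \<in> {..<s0} then g_inner k x else g_outer k x) = g_sq k"
    by (rule ext) (simp add: g_sq_def s0_def)
  moreover have "(if s \<in> {..<s0} then (*) (g_inner_deriv k s) else (*) (g_outer_deriv k s)) = (*) (g_sq_deriv k s)"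
    by (simp add: g_sq_deriv_def s0_def)
  ultimately show ?thesis by (simp add: has_field_derivative_def)
qed

lemma continuous_on_g_sq_deriv:
  assumes k: "k > 0"
  shows "continuous_on UNIV (g_sq_deriv k)"
proof -
  define s0 where "s0 = 1 / (3 * k)"
  have s0: "0 < s0" "s0 < 1/k" using k by (auto simp: s0_def field_simps)
  have "continuous_on ({..s0} \<union> {s0..}) (g_sq_deriv k)"
  proof (rule continuous_on_closed_Un)
    have "k * s0 < 1" using s0 k by (simp add: field_simps)
    then have "k * x < 1" if "x \<le> s0" for x
      using mult_left_mono[OF that, of k] k by linarith
    then have "2 * sqrt (1 - k * x) \<noteq> 0" if "x \<in> {..s0}" for x
      using that by fastforce
    then have "continuous_on {..s0} (g_inner_deriv k)"
      unfolding g_inner_deriv_def[abs_def] by (intro continuous_intros) auto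
    moreover have "g_inner_deriv k x = g_sq_deriv k x" if "x \<in> {..s0}" for x
      using that g_inner_deriv_eq_g_outer_deriv[OF k]
      by (cases "x = s0") (auto simp: g_sq_deriv_def s0_def)
    ultimately show "continuous_on {..s0} (g_sq_deriv k)" using continuous_on_cong by blast
    have "continuous_on {s0..} (g_outer_deriv k)"
      unfolding g_outer_deriv_def[abs_def] using s0 k by (intro continuous_intros) auto
    moreover have "g_outer_deriv k x = g_sq_deriv k x" if "x \<in> {s0..}" for x
      using that by (auto simp: g_sq_deriv_def s0_def)
    ultimately show "continuous_on {s0..} (g_sq_deriv k)" using continuous_on_cong by blast
  qed auto
  moreover have "{..s0} \<union> {s0..} = UNIV" by auto
  ultimately show ?thesis by simp
qed

lemma gk_eq_g_sq: "k > 0 \<Longrightarrow> gk k t = g_sq k (t\<^sup>2)"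
proof -
  have "(\<bar>t\<bar> < sqrt (1 / (3 * k))) = (t\<^sup>2 < 1 / (3 * k))"
    by (metis real_sqrt_abs real_sqrt_less_iff)
  then show ?thesis
    unfolding gk_def g_sq_def g_inner_def g_outer_def real_sqrt_abs by simp
qed

lemma has_real_derivative_gk: "k > 0 \<Longrightarrow> (gk k has_real_derivative dgk k t) (at t)"
proof -
  assume k: "k > 0"
  have "((\<lambda>t. g_sq k (t\<^sup>2)) has_real_derivative g_sq_deriv k (t\<^sup>2) * (2 * t)) (at t)"
  proof (rule DERIV_chain2[OF has_real_derivative_g_sq[OF k]])
    show "((\<lambda>t. t\<^sup>2) has_real_derivative 2 * t) (at t)"
      by (rule derivative_eq_intros refl | simp)+
  qed
  moreover have "gk k = (\<lambda>t. g_sq k (t\<^sup>2))" using gk_eq_g_sq[OF k] by auto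
  ultimately show ?thesis by (simp add: dgk_def)
qed

lemma continuous_on_dgk: "k > 0 \<Longrightarrow> continuous_on UNIV (dgk k)"
  unfolding dgk_def[abs_def]
  by (intro continuous_intros continuous_on_compose2[OF continuous_on_g_sq_deriv]) auto

lemma continuous_on_gk: "k > 0 \<Longrightarrow> continuous_on S (gk k)"
  by (intro continuous_at_imp_continuous_on ballI DERIV_isCont[OF has_real_derivative_gk])

lemma gk_gt: "k > 0 \<Longrightarrow> sqrt (1/6) < gk k t"
proof -
  assume k: "k > 0"
  show ?thesis
  proof (cases "t\<^sup>2 < 1 / (3 * k)")
    case True
    then have "1/6 < 1 - k * t\<^sup>2" using k by (simp add: field_simps)
    then show ?thesis using True k by (simp add: gk_eq_g_sq g_sq_def g_inner_def)
  next
    case False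
    moreover have "0 < 1 / (3 * k)" using k by simp
    ultimately have "t\<^sup>2 > 0" by linarith
    then have "0 < 1 / (3 * sqrt (2 * k) * sqrt (t\<^sup>2))" using k by simp
    moreover have "gk k t = 1 / (3 * sqrt (2 * k) * sqrt (t\<^sup>2)) + sqrt (1/6)"
      using False k by (simp only: gk_eq_g_sq g_sq_def g_outer_def if_False)
    ultimately show ?thesis by linarith
  qed
qed

lemma gk_pos: "k > 0 \<Longrightarrow> 0 < gk k t"
  using gk_gt[of k t] real_sqrt_ge_zero[of "1/6"] by linarith

context
  fixes k :: real
  assumes k: "k > 0"
begin

lemma has_real_derivative_Gk: "(Gk k has_real_derivative gk k t) (at t)"
proof -
  define a where "a = - \<bar>t\<bar> - 1"
  define b where "b = \<bar>t\<bar> + 1"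
  have "((\<lambda>u. LBINT y=ereal 0..u. gk k y) has_vector_derivative gk k t) (at t within {a..b})"
    by (rule interval_integral_FTC2) (auto simp: a_def b_def continuous_on_gk[OF k])
  then have "((\<lambda>u. LBINT y=0..u. gk k y) has_vector_derivative gk k t) (at t within {a..b})"
    by (simp add: zero_ereal_def)
  then have "((\<lambda>u. LBINT y=0..u. gk k y) has_vector_derivative gk k t) (at t within {a<..<b})"
    by (rule has_vector_derivative_within_subset) auto
  then have "((\<lambda>u. LBINT y=0..u. gk k y) has_vector_derivative gk k t) (at t)"
    by (subst (asm) has_vector_derivative_within_open) (auto simp: a_def b_def)
  then show ?thesis
    by (simp add: has_real_derivative_iff_has_vector_derivative Gk_def[abs_def])
qed

lemma Gk_0: "Gk k 0 = 0"
  using interval_integral_endpoints_same[of 0 "gk k"] by (simp add: Gk_def zero_ereal_def)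

lemma Gk_eq_mult_gk: obtains z where "Gk k t = t * gk k z"
proof (cases "0 < t")
  case True
  then obtain z where "Gk k t - Gk k 0 = (t - 0) * gk k z"
    using MVT2[of 0 t "Gk k" "gk k"] has_real_derivative_Gk by blast
  then show ?thesis using Gk_0 by (intro that[of z]) simp
next
  case False
  show ?thesis
  proof (cases "t = 0")
    case True
    then show ?thesis using Gk_0 by (intro that[of 0]) simp
  next
    case False
    with \<open>\<not> 0 < t\<close> have "t < 0" by simp
    then obtain z where "Gk k 0 - Gk k t = (0 - t) * gk k z"
      using MVT2[of t 0 "Gk k" "gk k"] has_real_derivative_Gk by blast
    then show ?thesis using Gk_0 by (intro that[of z]) simp
  qed
qed

lemma abs_Gk_ge: "sqrt (1/6) * \<bar>t\<bar> \<le> \<bar>Gk k t\<bar>"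
proof -
  obtain z where z: "Gk k t = t * gk k z" by (rule Gk_eq_mult_gk)
  have "sqrt (1/6) * \<bar>t\<bar> \<le> gk k z * \<bar>t\<bar>"
    using gk_gt[OF k, of z] by (simp add: mult_right_mono)
  then show ?thesis
    using z gk_pos[OF k, of z] by (simp add: abs_mult mult.commute)
qed

lemma strict_mono_Gk: "strict_mono (Gk k)"
  by (rule strict_monoI, rule DERIV_pos_imp_increasing[where f="Gk k"])
    (auto intro!: has_real_derivative_Gk gk_pos[OF k])

lemma surj_Gk: "surj (Gk k)"
proof -
  have "\<exists>x. Gk k x = y" for y
  proof -
    define b where "b = sqrt 6 * \<bar>y\<bar>"
    have b: "0 \<le> b" by (simp add: b_def)
    have "\<bar>y\<bar> \<le> \<bar>Gk k b\<bar>" "\<bar>y\<bar> \<le> \<bar>Gk k (-b)\<bar>"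
      using abs_Gk_ge[of b] abs_Gk_ge[of "-b"]
      by (simp_all add: b_def real_sqrt_mult[symmetric] mult.assoc[symmetric])
    moreover have "0 \<le> Gk k b" "Gk k (-b) \<le> 0"
      using strict_mono_less_eq[OF strict_mono_Gk, of 0 b] strict_mono_less_eq[OF strict_mono_Gk, of "-b" 0] b
      by (simp_all add: Gk_0)
    moreover have "continuous_on {-b..b} (Gk k)"
      by (intro continuous_at_imp_continuous_on ballI DERIV_isCont[OF has_real_derivative_Gk])
    ultimately show ?thesis
      using IVT'[of "Gk k" "-b" y b] b by force
  qed
  then show ?thesis by (metis surjI)
qed

lemma Ginvk_Gk: "Ginvk k (Gk k t) = t"
  unfolding Ginvk_def using strict_mono_Gk by (simp add: strict_mono_imp_inj_on inv_f_f)

lemma Gk_Ginvk: "Gk k (Ginvk k y) = y"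
  unfolding Ginvk_def using surj_Gk by (simp add: surj_f_inv_f)

lemma abs_Ginvk_le: "\<bar>Ginvk k y\<bar> \<le> sqrt 6 * \<bar>y\<bar>"
proof -
  have "sqrt (1/6) * \<bar>Ginvk k y\<bar> \<le> \<bar>y\<bar>"
    using abs_Gk_ge[of "Ginvk k y"] by (simp add: Gk_Ginvk)
  then show ?thesis
    by (simp add: real_sqrt_divide field_simps)
qed

lemma isCont_Ginvk: "isCont (Ginvk k) y"
proof -
  have "isCont (Ginvk k) (Gk k (Ginvk k y))"
    by (rule isCont_inverse_function[where d=1])
      (auto simp: Ginvk_Gk intro: DERIV_isCont[OF has_real_derivative_Gk])
  then show ?thesis by (simp add: Gk_Ginvk)
qed

lemma has_real_derivative_Ginvk: "(Ginvk k has_real_derivative 1 / gk k (Ginvk k y)) (at y)"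
proof -
  have "(Ginvk k has_real_derivative inverse (gk k (Ginvk k y))) (at y)"
    by (rule DERIV_inverse_function[where f="Gk k" and a="y - 1" and b="y + 1", OF has_real_derivative_Gk])
      (use gk_pos[OF k] in \<open>simp_all add: Gk_Ginvk isCont_Ginvk less_imp_neq[symmetric]\<close>)
  then show ?thesis by (simp add: inverse_eq_divide)
qed

lemma has_real_derivative_inverse_gk_Ginvk:
  "((\<lambda>y. 1 / gk k (Ginvk k y)) has_real_derivative
    - dgk k (Ginvk k y) / (gk k (Ginvk k y))^3) (at y)"
proof -
  have "((\<lambda>y. 1 / gk k (Ginvk k y)) has_real_derivative
      - (dgk k (Ginvk k y) * (1 / gk k (Ginvk k y))) / (gk k (Ginvk k y))\<^sup>2) (at y)"
    using DERIV_chain2[OF has_real_derivative_gk[OF k] has_real_derivative_Ginvk, of y]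
      gk_pos[OF k, of "Ginvk k y"]
    by (auto intro!: derivative_eq_intros simp: power2_eq_square)
  then show ?thesis
    using gk_pos[OF k, of "Ginvk k y"] by (simp add: power2_eq_square power3_eq_cube mult.assoc)
qed

lemma continuous_on_inverse_gk_Ginvk: "continuous_on UNIV (\<lambda>y. 1 / gk k (Ginvk k y))"
  by (intro continuous_at_imp_continuous_on ballI DERIV_isCont[OF has_real_derivative_inverse_gk_Ginvk])

lemma inverse_gk_le: "1 / gk k t \<le> sqrt 6"
  using gk_gt[OF k, of t] gk_pos[OF k, of t] by (simp add: real_sqrt_divide divide_simps mult.commute)

lemma continuous_on_inverse_gk_Ginvk_deriv:
  "continuous_on UNIV (\<lambda>y. - dgk k (Ginvk k y) / (gk k (Ginvk k y))^3)"
  using gk_pos[OF k]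
  by (intro continuous_intros continuous_on_compose2[OF continuous_on_gk[OF k]]
      continuous_on_compose2[OF continuous_on_dgk[OF k]] continuous_at_imp_continuous_on ballI
      isCont_Ginvk) (auto simp: less_imp_neq[symmetric])

end


lemma C2I:
  fixes f :: "real^'n::finite \<Rightarrow> real"
  assumes "continuous_on UNIV f" "\<And>i x. has_pd i f x" "\<And>j. continuous_on UNIV (pd j f)"
    "\<And>i j x. has_pd i (pd j f) x" "\<And>i j. continuous_on UNIV (pd i (pd j f))"
  shows "C2 f"
  unfolding C2_def
proof (intro conjI allI impI)
  fix js :: "'n list"
  show "continuous_on UNIV (pds js f)" if "length js \<le> 2"
    using that assms by (cases js; cases "tl js") auto
  show "has_pd i (pds js f) x" if "length js \<le> 1" for i x
    using that assms by (cases js) auto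
qed

lemma C2D:
  fixes f :: "real^'n::finite \<Rightarrow> real"
  assumes "C2 f"
  shows "continuous_on UNIV f" "\<And>i x. has_pd i f x" "\<And>j. continuous_on UNIV (pd j f)"
    "\<And>i j x. has_pd i (pd j f) x" "\<And>i j. continuous_on UNIV (pd i (pd j f))"
proof -
  have a: "\<And>js. length js \<le> 2 \<Longrightarrow> continuous_on UNIV (pds js f)"
    and b: "\<And>js i x. length js \<le> 1 \<Longrightarrow> has_pd i (pds js f) x"
    using assms unfolding C2_def by blast+
  show "continuous_on UNIV f" using a[where js="[]"] by simp
  show "\<And>i x. has_pd i f x" using b[where js="[]"] by simp
  show "\<And>j. continuous_on UNIV (pd j f)" using a[where js="[j]" for j] by simp
  show "\<And>i j x. has_pd i (pd j f) x" using b[where js="[j]" for j] by simp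
  show "\<And>i j. continuous_on UNIV (pd i (pd j f))" using a[where js="[i,j]" for i j] by simp
qed

lemma C2_comp:
  fixes v :: "real^'n::finite \<Rightarrow> real"
  assumes v: "C2 v"
    and d1: "\<And>y. (\<phi> has_real_derivative \<phi>' y) (at y)"
    and d2: "\<And>y. (\<phi>' has_real_derivative \<phi>'' y) (at y)"
    and c2: "continuous_on UNIV \<phi>''"
  shows "C2 (\<lambda>x. \<phi> (v x))"
proof -
  note cv = C2D(1)[OF v] and hv = C2D(2)[OF v] and cpv = C2D(3)[OF v]
    and hpv = C2D(4)[OF v] and cppv = C2D(5)[OF v]
  have c: "continuous_on UNIV \<phi>" "continuous_on UNIV \<phi>'"
    by (intro continuous_at_imp_continuous_on ballI DERIV_isCont[OF d1] DERIV_isCont[OF d2])+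
  have comp: "continuous_on UNIV (\<lambda>x. f (v x))" if "continuous_on UNIV f" for f :: "real \<Rightarrow> real"
    by (rule continuous_on_compose2[OF that cv]) simp
  have pd_comp: "pd j (\<lambda>x. \<phi> (v x)) = (\<lambda>x. \<phi>' (v x) * pd j v x)" for j
    by (intro ext pd_chain(2)[OF hv d1])
  have pd_pd_comp: "pd i (pd j (\<lambda>x. \<phi> (v x)))
      = (\<lambda>x. \<phi>'' (v x) * pd i v x * pd j v x + \<phi>' (v x) * pd i (pd j v) x)" for i j
    unfolding pd_comp
    by (intro ext) (simp add: pd_mult(2)[OF pd_chain(1)[OF hv d2] hpv] pd_chain(2)[OF hv d2])
  show ?thesis
  proof (rule C2I)
    show "continuous_on UNIV (\<lambda>x. \<phi> (v x))"
      by (rule comp[OF c(1)])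
    show "has_pd i (\<lambda>x. \<phi> (v x)) x" for i x
      by (rule pd_chain(1)[OF hv d1])
    show "continuous_on UNIV (pd j (\<lambda>x. \<phi> (v x)))" for j
      unfolding pd_comp by (intro continuous_on_mult comp c(2) cpv)
    show "has_pd i (pd j (\<lambda>x. \<phi> (v x))) x" for i j x
      unfolding pd_comp by (rule pd_mult(1)[OF pd_chain(1)[OF hv d2] hpv])
    show "continuous_on UNIV (pd i (pd j (\<lambda>x. \<phi> (v x))))" for i j
      unfolding pd_pd_comp by (intro continuous_on_add continuous_on_mult comp c(2) c2 cpv cppv)
  qed
qed

lemma L2_continuous_vanishing_outside_ball:
  fixes f :: "real^'n::finite \<Rightarrow> real"
  assumes "continuous_on UNIV f" "\<And>x. r < norm x \<Longrightarrow> f x = 0"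
  shows "L2 f"
  unfolding L2_def using assms
  by (auto intro!: continuous_imp_lebesgue_measurable integrable_continuous_vanishing_outside_ball[where r=r]
      continuous_on_power)

lemma L2_if_abs_le:
  fixes f g :: "real^'n::finite \<Rightarrow> real"
  assumes "L2 g" "f \<in> borel_measurable lebesgue" "\<And>x. \<bar>f x\<bar> \<le> C * \<bar>g x\<bar>"
  shows "L2 f"
  unfolding L2_def
proof
  show "integrable lebesgue (\<lambda>x. (f x)\<^sup>2)"
  proof (rule Bochner_Integration.integrable_bound)
    show "integrable lebesgue (\<lambda>x. C\<^sup>2 * (g x)\<^sup>2)"
      using assms(1) unfolding L2_def by simp
    have "\<bar>f x\<bar> \<le> \<bar>C * g x\<bar>" for x
      using assms(3)[of x] mult_right_mono[OF abs_ge_self abs_ge_zero, of C "g x"]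
      by (simp add: abs_mult)
    then show "AE x in lebesgue. norm ((f x)\<^sup>2) \<le> norm (C\<^sup>2 * (g x)\<^sup>2)"
      by (intro AE_I2) (simp add: power_mult_distrib[symmetric] abs_le_square_iff)
  qed (use assms(2) in measurable)
qed fact

lemma weak_pd_pd:
  fixes f :: "real^'n::finite \<Rightarrow> real"
  assumes "continuous_on UNIV f" "\<And>x. has_pd i f x" "continuous_on UNIV (pd i f)"
  shows "weak_pd i f (pd i f)"
  unfolding weak_pd_def using integration_by_parts_test_fun[OF assms] by blast

lemma test_fun_H1: "test_fun \<phi> \<Longrightarrow> \<phi> \<in> H1"
proof -
  assume t: "test_fun \<phi>"
  obtain r where r: "\<And>x. r < norm x \<Longrightarrow> \<phi> x = 0" using test_fun_bounded_support[OF t] by blast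
  have "pd i \<phi> x = 0" if "r < norm x" for i x
    using pd_eq_0_outside_ball[OF r that test_funD(2)[OF t]] .
  then have "L2 (pd i \<phi>)" for i
    using test_funD(3)[OF t] by (intro L2_continuous_vanishing_outside_ball[where r=r])
  then show ?thesis
    unfolding H1_def using L2_continuous_vanishing_outside_ball[OF test_funD(1)[OF t] r]
      weak_pd_pd[OF test_funD[OF t]] by blast
qed

lemma weak_gradD:
  assumes "v \<in> H1"
  shows "L2 (weak_grad v i)" "weak_pd i v (weak_grad v i)"
proof -
  have "\<exists>w. L2 w \<and> weak_pd i v w" using assms unfolding H1_def by blast
  then have "L2 (weak_grad v i) \<and> weak_pd i v (weak_grad v i)"
    unfolding weak_grad_def by (rule someI_ex)
  then show "L2 (weak_grad v i)" "weak_pd i v (weak_grad v i)" by auto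
qed

lemma weak_pd_AE_eq_pd:
  fixes f w :: "real^'n::finite \<Rightarrow> real"
  assumes cf: "continuous_on UNIV f" and hf: "\<And>x. has_pd i f x" and cpf: "continuous_on UNIV (pd i f)"
    and wk: "weak_pd i f w" and wm: "w \<in> borel_measurable lebesgue"
  shows "AE x in lebesgue. w x = pd i f x"
proof -
  have "AE x in lebesgue. w x - pd i f x = 0"
  proof (rule fundamental_lemma_calculus_of_variations)
    show "(\<lambda>x. w x - pd i f x) \<in> borel_measurable lebesgue"
      using wm continuous_imp_lebesgue_measurable[OF cpf] by measurable
    fix \<psi> :: "real^'n \<Rightarrow> real" assume t: "test_fun \<psi>"
    have i1: "integrable lebesgue (\<lambda>x. w x * \<psi> x)" using wk t unfolding weak_pd_def by blast
    have i2: "integrable lebesgue (\<lambda>x. pd i f x * \<psi> x)"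
      by (rule integration_by_parts_test_fun(2)[OF cf hf cpf t])
    show "integrable lebesgue (\<lambda>x. (w x - pd i f x) * \<psi> x)"
      using Bochner_Integration.integrable_diff[OF i1 i2] by (simp add: left_diff_distrib)
    have "(\<integral>x. f x * pd i \<psi> x \<partial>lebesgue) = - (\<integral>x. w x * \<psi> x \<partial>lebesgue)"
      using wk t unfolding weak_pd_def by blast
    then show "(\<integral>x. (w x - pd i f x) * \<psi> x \<partial>lebesgue) = 0"
      using integration_by_parts_test_fun(3)[OF cf hf cpf t]
      by (simp add: left_diff_distrib Bochner_Integration.integral_diff[OF i1 i2])
  qed
  then show ?thesis by simp
qed

lemma weak_grad_AE_eq_pd:
  fixes f :: "real^'n::finite \<Rightarrow> real"
  assumes "continuous_on UNIV f" "\<And>x. has_pd i f x" "continuous_on UNIV (pd i f)" "f \<in> H1"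
  shows "AE x in lebesgue. weak_grad f i x = pd i f x"
  using weak_gradD[OF assms(4), of i]
  by (intro weak_pd_AE_eq_pd[OF assms(1-3)]) (auto simp: L2_def)

lemma L2_pd_if_H1:
  fixes f :: "real^'n::finite \<Rightarrow> real"
  assumes "continuous_on UNIV f" "\<And>x. has_pd i f x" "continuous_on UNIV (pd i f)" "f \<in> H1"
  shows "L2 (pd i f)"
proof -
  have "integrable lebesgue (\<lambda>x. (weak_grad f i x)\<^sup>2)"
    using weak_gradD(1)[OF assms(4)] unfolding L2_def by blast
  moreover have "AE x in lebesgue. (weak_grad f i x)\<^sup>2 = (pd i f x)\<^sup>2"
    using weak_grad_AE_eq_pd[OF assms] by eventually_elim simp
  ultimately show ?thesis
    using weak_gradD(1)[OF assms(4), of i] continuous_imp_lebesgue_measurable[OF assms(3)]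
    unfolding L2_def by (subst (asm) integrable_cong_AE) auto
qed

lemma continuous_AE_eq_0_imp_eq_0:
  fixes F :: "real^'n::finite \<Rightarrow> real"
  assumes c: "continuous_on UNIV F" and ae: "AE x in lebesgue. F x = 0"
  shows "F x = 0"
proof -
  have "closed {x. F x = 0}" using continuous_closed_preimage_constant[OF c closed_UNIV] by simp
  then have "x \<in> {x. F x = 0}"
    by (rule mem_closed_if_AE_lebesgue_open[OF open_UNIV]) (use ae in auto)
  then show ?thesis by simp
qed

lemma H1_comp:
  fixes v :: "real^'n::finite \<Rightarrow> real"
  assumes v: "C2 v" "v \<in> H1"
    and d: "\<And>y. (\<phi> has_real_derivative \<phi>' y) (at y)" and c: "continuous_on UNIV \<phi>'"
    and bounds: "\<And>y. \<bar>\<phi> y\<bar> \<le> C * \<bar>y\<bar>" "\<And>y. \<bar>\<phi>' y\<bar> \<le> C"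
  shows "(\<lambda>x. \<phi> (v x)) \<in> H1"
proof -
  note cv = C2D(1)[OF v(1)] and hv = C2D(2)[OF v(1)] and cpv = C2D(3)[OF v(1)]
  have pd_comp: "pd i (\<lambda>x. \<phi> (v x)) = (\<lambda>x. \<phi>' (v x) * pd i v x)" for i
    by (intro ext pd_chain(2)[OF hv d])
  have "continuous_on UNIV \<phi>"
    by (intro continuous_at_imp_continuous_on ballI DERIV_isCont[OF d])
  then have cu: "continuous_on UNIV (\<lambda>x. \<phi> (v x))"
    by (rule continuous_on_compose2[OF _ cv]) simp
  have "continuous_on UNIV (\<lambda>x. \<phi>' (v x))"
    by (rule continuous_on_compose2[OF c cv]) simp
  then have cpu: "continuous_on UNIV (pd i (\<lambda>x. \<phi> (v x)))" for i
    unfolding pd_comp by (intro continuous_on_mult cpv)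
  have "L2 (\<lambda>x. \<phi> (v x))"
    using v(2) bounds(1) continuous_imp_lebesgue_measurable[OF cu] unfolding H1_def
    by (blast intro: L2_if_abs_le)
  moreover have "L2 (pd i (\<lambda>x. \<phi> (v x)))" for i
  proof (rule L2_if_abs_le[OF L2_pd_if_H1[OF cv hv cpv v(2)]])
    show "\<bar>pd i (\<lambda>x. \<phi> (v x)) x\<bar> \<le> C * \<bar>pd i v x\<bar>" for x
      unfolding pd_comp using bounds(2) by (simp add: abs_mult mult_right_mono)
  qed (rule continuous_imp_lebesgue_measurable[OF cpu])
  ultimately show ?thesis
    unfolding H1_def using weak_pd_pd[OF cu pd_chain(1)[OF hv d] cpu] by blast
qed

section \<open>The Euler--Lagrange equation\<close>

definition laplacian :: "(real^'n::finite \<Rightarrow> real) \<Rightarrow> real^'n \<Rightarrow> real" where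
  "laplacian f x = (\<Sum>i\<in>UNIV. pd i (pd i f) x)"

definition reaction :: "real \<Rightarrow> real \<Rightarrow> (real^'n::finite \<Rightarrow> real) \<Rightarrow> (real^'n \<Rightarrow> real) \<Rightarrow> real^'n \<Rightarrow> real"
  where "reaction \<kappa> q V v x =
    (V x * Ginvk \<kappa> (v x) - \<bar>Ginvk \<kappa> (v x)\<bar> powr (q - 2) * Ginvk \<kappa> (v x)) / gk \<kappa> (Ginvk \<kappa> (v x))"

lemma continuous_on_reaction:
  assumes "\<kappa> > 0" "q > 2" "continuous_on UNIV V" "continuous_on UNIV v"
  shows "continuous_on UNIV (reaction \<kappa> q V v)"
proof -
  have "continuous_on UNIV (Ginvk \<kappa>)"
    by (intro continuous_at_imp_continuous_on ballI isCont_Ginvk[OF assms(1)])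
  then have cu: "continuous_on UNIV (\<lambda>x. Ginvk \<kappa> (v x))"
    by (rule continuous_on_compose2[OF _ assms(4)]) simp
  have cgu: "continuous_on UNIV (\<lambda>x. gk \<kappa> (Ginvk \<kappa> (v x)))"
    by (rule continuous_on_compose2[OF continuous_on_gk[OF assms(1), of UNIV] cu]) simp
  have "continuous_on UNIV (\<lambda>x. \<bar>Ginvk \<kappa> (v x)\<bar> powr (q - 2))"
    using assms(2) by (intro continuous_on_powr' continuous_on_rabs cu continuous_on_const) auto
  then show ?thesis
    unfolding reaction_def[abs_def] using gk_pos[OF assms(1)]
    by (intro continuous_on_divide continuous_on_diff continuous_on_mult assms(3) cu cgu)
      (auto simp: less_imp_neq[symmetric])
qed

lemma J_deriv_eq_classical:
  fixes v :: "real^'n::finite \<Rightarrow> real"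
  assumes "\<kappa> > 0" "q > 2" "continuous_on UNIV V" "C2 v" "v \<in> H1" "test_fun \<phi>"
  shows "J_deriv \<kappa> q V v \<phi>
    = (\<integral>x. (\<Sum>i\<in>UNIV. pd i v x * pd i \<phi> x) + reaction \<kappa> q V v x * \<phi> x \<partial>lebesgue)"
  unfolding J_deriv_def
proof (rule integral_cong_AE)
  note cv = C2D(1)[OF assms(4)] and hv = C2D(2)[OF assms(4)] and cpv = C2D(3)[OF assms(4)]
  note c\<phi> = test_funD(1)[OF assms(6)] and h\<phi> = test_funD(2)[OF assms(6)]
    and cp\<phi> = test_funD(3)[OF assms(6)] and \<phi>H1 = test_fun_H1[OF assms(6)]
  have "AE x in lebesgue. \<forall>i\<in>UNIV. weak_grad v i x = pd i v x \<and> weak_grad \<phi> i x = pd i \<phi> x"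
    using weak_grad_AE_eq_pd[OF cv hv cpv assms(5)] weak_grad_AE_eq_pd[OF c\<phi> h\<phi> cp\<phi> \<phi>H1]
    by (intro AE_finite_allI) (auto intro: AE_conjI)
  then show "AE x in lebesgue.
      (\<Sum>i\<in>UNIV. weak_grad v i x * weak_grad \<phi> i x)
        + V x * Ginvk \<kappa> (v x) / gk \<kappa> (Ginvk \<kappa> (v x)) * \<phi> x
        - \<bar>Ginvk \<kappa> (v x)\<bar> powr (q - 2) * Ginvk \<kappa> (v x) / gk \<kappa> (Ginvk \<kappa> (v x)) * \<phi> x
      = (\<Sum>i\<in>UNIV. pd i v x * pd i \<phi> x) + reaction \<kappa> q V v x * \<phi> x"
    by eventually_elim (simp add: reaction_def diff_divide_distrib left_diff_distrib)
  have "continuous_on UNIV (Ginvk \<kappa>)"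
    by (intro continuous_at_imp_continuous_on ballI isCont_Ginvk[OF assms(1)])
  then have cu: "continuous_on UNIV (\<lambda>x. Ginvk \<kappa> (v x))"
    by (rule continuous_on_compose2[OF _ cv]) simp
  have [measurable]: "weak_grad v i \<in> borel_measurable lebesgue" "weak_grad \<phi> i \<in> borel_measurable lebesgue"
    for i using weak_gradD(1)[OF assms(5)] weak_gradD(1)[OF \<phi>H1] by (simp_all add: L2_def)
  have [measurable]: "V \<in> borel_measurable lebesgue" "\<phi> \<in> borel_measurable lebesgue"
    "(\<lambda>x. Ginvk \<kappa> (v x)) \<in> borel_measurable lebesgue"
    "(\<lambda>x. gk \<kappa> (Ginvk \<kappa> (v x))) \<in> borel_measurable lebesgue"
    using assms(3) c\<phi> cu continuous_on_compose2[OF continuous_on_gk[OF assms(1), of UNIV] cu]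
    by (auto intro: continuous_imp_lebesgue_measurable)
  show "(\<lambda>x. (\<Sum>i\<in>UNIV. weak_grad v i x * weak_grad \<phi> i x)
      + V x * Ginvk \<kappa> (v x) / gk \<kappa> (Ginvk \<kappa> (v x)) * \<phi> x
      - \<bar>Ginvk \<kappa> (v x)\<bar> powr (q - 2) * Ginvk \<kappa> (v x) / gk \<kappa> (Ginvk \<kappa> (v x)) * \<phi> x)
    \<in> borel_measurable lebesgue"
    by measurable
  show "(\<lambda>x. (\<Sum>i\<in>UNIV. pd i v x * pd i \<phi> x) + reaction \<kappa> q V v x * \<phi> x) \<in> borel_measurable lebesgue"
    using continuous_on_reaction[OF assms(1-3) cv]
    by (intro continuous_imp_lebesgue_measurable continuous_intros cpv cp\<phi> c\<phi>)
qed

lemma J_deriv_test_fun: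
  fixes v :: "real^'n::finite \<Rightarrow> real"
  assumes "\<kappa> > 0" "q > 2" "continuous_on UNIV V" "C2 v" "v \<in> H1" "test_fun \<phi>"
  shows "J_deriv \<kappa> q V v \<phi> = (\<integral>x. (reaction \<kappa> q V v x - laplacian v x) * \<phi> x \<partial>lebesgue)"
proof -
  note cpv = C2D(3)[OF assms(4)] and hpv = C2D(4)[OF assms(4)] and cppv = C2D(5)[OF assms(4)]
  note parts = integration_by_parts_test_fun[OF cpv hpv cppv assms(6)]
  obtain r where r: "\<And>x. r < norm x \<Longrightarrow> \<phi> x = 0"
    using test_fun_bounded_support[OF assms(6)] by blast
  have int_reaction: "integrable lebesgue (\<lambda>x. reaction \<kappa> q V v x * \<phi> x)"
    using continuous_on_reaction[OF assms(1-3) C2D(1)[OF assms(4)]] test_funD(1)[OF assms(6)] r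
    by (intro integrable_continuous_vanishing_outside_ball[where r=r] continuous_intros) auto
  have "J_deriv \<kappa> q V v \<phi>
      = (\<Sum>i\<in>UNIV. \<integral>x. pd i v x * pd i \<phi> x \<partial>lebesgue) + (\<integral>x. reaction \<kappa> q V v x * \<phi> x \<partial>lebesgue)"
    using J_deriv_eq_classical[OF assms] parts(1) int_reaction by simp
  also have "\<dots> = - (\<Sum>i\<in>UNIV. \<integral>x. pd i (pd i v) x * \<phi> x \<partial>lebesgue)
      + (\<integral>x. reaction \<kappa> q V v x * \<phi> x \<partial>lebesgue)"
    using parts(3) by (simp add: sum_negf)
  also have "\<dots> = (\<integral>x. (reaction \<kappa> q V v x - laplacian v x) * \<phi> x \<partial>lebesgue)"
    using parts(2) int_reaction
    by (simp add: laplacian_def left_diff_distrib sum_distrib_right)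
  finally show ?thesis .
qed

lemma laplacian_eq_reaction_if_critical_point:
  fixes v :: "real^'n::finite \<Rightarrow> real"
  assumes "\<kappa> > 0" "q > 2" "continuous_on UNIV V" "C2 v" "critical_point \<kappa> q V v"
  shows "laplacian v x = reaction \<kappa> q V v x"
proof -
  have vH1: "v \<in> H1" using assms(5) unfolding critical_point_def by blast
  have cont: "continuous_on UNIV (\<lambda>x. reaction \<kappa> q V v x - laplacian v x)"
    using continuous_on_reaction[OF assms(1-3) C2D(1)[OF assms(4)]] C2D(5)[OF assms(4)]
    unfolding laplacian_def[abs_def] by (intro continuous_intros) auto
  have "AE x in lebesgue. reaction \<kappa> q V v x - laplacian v x = 0"
  proof (rule fundamental_lemma_calculus_of_variations)
    fix \<psi> :: "real^'n \<Rightarrow> real" assume t: "test_fun \<psi>"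
    obtain r where "\<And>x. r < norm x \<Longrightarrow> \<psi> x = 0" using test_fun_bounded_support[OF t] by blast
    then show "integrable lebesgue (\<lambda>x. (reaction \<kappa> q V v x - laplacian v x) * \<psi> x)"
      by (intro integrable_continuous_vanishing_outside_ball[where r=r]
          continuous_on_mult[OF cont test_funD(1)[OF t]]) auto
    show "(\<integral>x. (reaction \<kappa> q V v x - laplacian v x) * \<psi> x \<partial>lebesgue) = 0"
      using assms(5) test_fun_H1[OF t] J_deriv_test_fun[OF assms(1-4) vH1 t]
      unfolding critical_point_def by simp
  qed (rule continuous_imp_lebesgue_measurable[OF cont])
  then show ?thesis using continuous_AE_eq_0_imp_eq_0[OF cont] by simp
qed

lemma classical_solution_Ginvk:
  fixes v :: "real^'n::finite \<Rightarrow> real"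
  assumes \<kappa>: "\<kappa> > 0" and v: "C2 v" and eq: "\<And>x. laplacian v x = reaction \<kappa> q V v x"
  shows "classical_solution \<kappa> q V (\<lambda>x. Ginvk \<kappa> (v x))"
proof -
  define u where "u = (\<lambda>x. Ginvk \<kappa> (v x))"
  have C2u: "C2 u"
    unfolding u_def
    by (rule C2_comp[OF v has_real_derivative_Ginvk[OF \<kappa>] has_real_derivative_inverse_gk_Ginvk[OF \<kappa>]
          continuous_on_inverse_gk_Ginvk_deriv[OF \<kappa>]])
  note hv = C2D(2)[OF v] and hpv = C2D(4)[OF v] and g_pos = gk_pos[OF \<kappa>]
  have pd_u: "pd i u y = pd i v y / gk \<kappa> (u y)" for i y
    using pd_chain(2)[OF hv has_real_derivative_Ginvk[OF \<kappa>]] by (simp add: u_def)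
  have "- (\<Sum>i\<in>UNIV. pd i (\<lambda>y. (gk \<kappa> (u y))\<^sup>2 * pd i u y) x)
      + gk \<kappa> (u x) * deriv (gk \<kappa>) (u x) * (\<Sum>i\<in>UNIV. (pd i u x)\<^sup>2)
      + V x * u x = \<bar>u x\<bar> powr (q - 2) * u x" for x
  proof -
    define g d where "g = gk \<kappa> (u x)" and "d = dgk \<kappa> (u x)"
    have g0: "g \<noteq> 0" using g_pos[of "u x"] by (simp add: g_def)
    have flux: "(\<lambda>y. (gk \<kappa> (u y))\<^sup>2 * pd i u y) = (\<lambda>y. gk \<kappa> (u y) * pd i v y)" for i
      using g_pos by (simp add: pd_u power2_eq_square less_imp_neq[symmetric])
    have "pd i (\<lambda>y. gk \<kappa> (u y)) x = d * pd i u x" "has_pd i (\<lambda>y. gk \<kappa> (u y)) x" for i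
      using pd_chain[OF C2D(2)[OF C2u] has_real_derivative_gk[OF \<kappa>]] by (auto simp: d_def)
    then have div_flux: "pd i (\<lambda>y. gk \<kappa> (u y) * pd i v y) x = d / g * (pd i v x)\<^sup>2 + g * pd i (pd i v) x"
      for i using pd_mult(2)[OF _ hpv, of i] by (simp add: pd_u g_def power2_eq_square)
    have div_g2_grad_u: "(\<Sum>i\<in>UNIV. pd i (\<lambda>y. (gk \<kappa> (u y))\<^sup>2 * pd i u y) x)
        = d / g * (\<Sum>i\<in>UNIV. (pd i v x)\<^sup>2) + g * laplacian v x"
      unfolding flux div_flux laplacian_def by (simp add: sum.distrib sum_distrib_left)
    have grad_u: "(\<Sum>i\<in>UNIV. (pd i u x)\<^sup>2) = (\<Sum>i\<in>UNIV. (pd i v x)\<^sup>2) / g\<^sup>2"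
      by (simp add: pd_u g_def power_divide sum_divide_distrib)
    have "deriv (gk \<kappa>) (u x) = d"
      by (simp add: DERIV_imp_deriv[OF has_real_derivative_gk[OF \<kappa>]] d_def)
    moreover have "laplacian v x = V x * u x / g - \<bar>u x\<bar> powr (q - 2) * u x / g"
      using eq[of x] by (simp add: reaction_def u_def g_def diff_divide_distrib)
    ultimately show ?thesis
      unfolding div_g2_grad_u grad_u g_def[symmetric] using g0
      by (simp add: field_simps power2_eq_square)
  qed
  then show ?thesis
    using C2u unfolding classical_solution_def u_def by blast
qed

text \<open>Only \<open>\<kappa> > 0\<close> and \<open>q > 2\<close> are used: the bounds on \<open>N\<close>, \<open>q\<close> and \<open>V\<close> serve to make \<open>J\<^sub>\<kappa>\<close> a
  \<open>C\<^sup>1\<close> functional with derivative \<open>J_deriv\<close>, which the statement takes as given.\<close>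

theorem lemma2p2:
  fixes V :: "real^'n::finite \<Rightarrow> real" and v :: "real^'n \<Rightarrow> real"
    and q \<kappa> V0 Vinf :: real
  assumes N3: "CARD('n) \<ge> 3"
    and q: "2 < q" "q < 2 * real CARD('n) / (real CARD('n) - 2)"
    and \<kappa>: "\<kappa> > 0"
    and Vcont: "continuous_on UNIV V"
    and V0: "0 < V0" "V0 \<le> Vinf"
    and Vbd: "\<And>x. V0 \<le> V x \<and> V x \<le> Vinf"
    and vC2: "C2 v" and vH1: "v \<in> H1"
    and crit: "critical_point \<kappa> q V v"
  shows "C2 (\<lambda>x. Ginvk \<kappa> (v x)) \<and> (\<lambda>x. Ginvk \<kappa> (v x)) \<in> H1
         \<and> classical_solution \<kappa> q V (\<lambda>x. Ginvk \<kappa> (v x))"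
proof -
  have solution: "classical_solution \<kappa> q V (\<lambda>x. Ginvk \<kappa> (v x))"
    using laplacian_eq_reaction_if_critical_point[OF \<kappa> q(1) Vcont vC2 crit]
    by (rule classical_solution_Ginvk[OF \<kappa> vC2])
  have "(\<lambda>x. Ginvk \<kappa> (v x)) \<in> H1"
    using abs_Ginvk_le[OF \<kappa>] inverse_gk_le[OF \<kappa>] gk_pos[OF \<kappa>]
    by (intro H1_comp[OF vC2 vH1 has_real_derivative_Ginvk[OF \<kappa>] continuous_on_inverse_gk_Ginvk[OF \<kappa>],
          where C="sqrt 6"]) (auto simp: abs_of_pos)
  with solution show ?thesis unfolding classical_solution_def by blast
qed

end
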